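(* Let $q$ be a prime power, $m\ge1$, $1\le k\le n$, $g_1,\dots,g_n\in\mathbb{F}_{q^m}$ linearly independent over $\mathbb{F}_q$, $\mathbf g=(g_1,\dots,g_n)$, $\mathbf r=(r_1,\dots,r_n)\in\mathbb{F}_{q^m}^n$. Then Algorithm 3 (described in the context) yields a minimal basis of the interpolation module $\mathfrak M(\mathbf r)$ with respect to the $(0,k-1)$-weighted term-over-position order, where the leading position of the first row is $1$ and the leading position of the second row is $2$.
   Context: Write $[i]:=q^i$. A $q$-linearized polynomial is $f(x)=\sum_{i=0}^{d}a_ix^{[i]}$, $a_i\in\mathbb{F}_{q^m}$; if $a_d\ne0$, $d=\mathrm{qdeg}(f)$ ($\mathrm{qdeg}(0)=-\infty$). $\mathcal{L}_q(x,q^m)$ is the ring of these under addition and composition $\circ$. $\Pi_{\mathbf g}(x)=\prod_{u\in\langle g_1,\dots,g_n\rangle}(x-u)$ ($\mathbb{F}_q$-span), of $q$-degree $n$ in $\mathcal{L}_q(x,q^m)$. $\Lambda_{\mathbf g,\mathbf r}(x)=\sum_{i=1}^n(-1)^{n-i}r_i\det(\mathfrak D_i(\mathbf g,x))/\det(M_n(g_1,\dots,g_n))$ ($M_n(v_1,\dots,v_s)$ the $n\times s$ matrix with $(j,l)$ entry $v_l^{[j-1]}$; $\mathfrak D_i(\mathbf g,x)$ is $M_n(g_1,\dots,g_n,x)$ without the $i$-th column), in $\mathcal{L}_q(x,q^m)$ with $\Lambda_{\mathbf g,\mathbf r}(g_i)=r_i$. $\mathcal{L}_q(x,q^m)^2$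 is a left module via $h\circ[f_1\ f_2]=[h\circ f_1\ \ h\circ f_2]$; $\mathfrak M(\mathbf r)$ is the set of all $\beta\circ[\Pi_{\mathbf g}\ \ 0]+\gamma\circ[-\Lambda_{\mathbf g,\mathbf r}\ \ x]$, $\beta,\gamma\in\mathcal{L}_q(x,q^m)$. Monomials are $x^{[i]}e_j$, $j\in\{1,2\}$. $(0,k-1)$-weighted term-over-position order: with $w_1=0,w_2=k-1$, $x^{[i_1]}e_{j_1}<x^{[i_2]}e_{j_2}$ iff $i_1+w_{j_1}<i_2+w_{j_2}$ or (equality and $j_1<j_2$). $\mathrm{lm}(f)$, $\mathrm{lt}(f)$, $\mathrm{lpos}(f)$: the largest monomial of nonzero $f$, that term with its coefficient, and its coordinate. A basis is a linearly independent generating set ($\sum a_i\circ f^{(i)}=0\Rightarrow a_i=0$). $f$ reduces modulo a set $F$ of nonzero elements in one step if $h=f-\sum_i(b_ix^{[a_i]})\circ f^{(i)}$ for some $f^{(i)}\in F$, $b_i\in\mathbb{F}_{q^m}$, $a_i\ge0$ with $\mathrm{lm}(f)=x^{[a_i]}\circ\mathrm{lm}(f^{(i)})$ and $\mathrm{lt}(f)=\sum_i(b_ix^{[a_i]})\circ\mathrm{lt}(f^{(i)})$; $f$ is minimal w.r.t. $F$ if it cannot be reduced modulo $F$; a basis $B$ is minimal if each $b\in B$ is minimal w.r.t. $B\setminus\{b\}$. Matrix composition of $2\times2$ matrices over $\mathcal{L}_q(x,q^m)$ is defined like matrix multiplication with products replaced by composition. Algorithm 3 (input $k,\mathbf g,\mathbf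 r$): $B_0=\begin{bmatrix}x&0\\0&x\end{bmatrix}$; writing $B_i=\begin{bmatrix}P_i&-K_i\\N_i&-D_i\end{bmatrix}$, for $i=1,\dots,n$: $\Gamma_i:=P_{i-1}(g_i)-K_{i-1}(r_i)$, $\Delta_i:=N_{i-1}(g_i)-D_{i-1}(r_i)$; if [$\mathrm{qdeg}(P_{i-1})\le\mathrm{qdeg}(D_{i-1})+k-1$ and $\Gamma_i\ne0$] or $\Delta_i=0$, then $B_i:=\begin{bmatrix}x^q-\Gamma_i^{q-1}x&0\\\Delta_ix&-\Gamma_ix\end{bmatrix}\circ B_{i-1}$; else $B_i:=\begin{bmatrix}\Delta_ix&-\Gamma_ix\\0&x^q-\Delta_i^{q-1}x\end{bmatrix}\circ B_{i-1}$. Return $B_n$ (its two rows). *)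

theory Defs
  imports "Jordan_Normal_Form.Determinant" "HOL-Computational_Algebra.Polynomial"
    "HOL-Library.Extended_Real"
begin

(* Linearized polynomials are
   ordinary polynomials in 'a poly all of whose monomials are of the form x^(q^i);
   composition is pcompose, evaluation is poly. *)

definition Fq :: "nat \<Rightarrow> 'a::field set" where
  "Fq q = {x. x ^ q = x}"

definition is_linearized :: "nat \<Rightarrow> 'a::field poly \<Rightarrow> bool" where
  "is_linearized q f \<longleftrightarrow> (\<forall>i. coeff f i \<noteq> 0 \<longrightarrow> (\<exists>j. i = q ^ j))"

definition qdegn :: "nat \<Rightarrow> 'a::field poly \<Rightarrow> nat" where
  "qdegn q f = Max {i. coeff f (q ^ i) \<noteq> 0}"

definition qdeg :: "nat \<Rightarrow> 'a::field poly \<Rightarrow> ereal" where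
  "qdeg q f = (if f = 0 then -\<infinity> else ereal (real (qdegn q f)))"

definition Fq_lin_indep :: "nat \<Rightarrow> 'a::field list \<Rightarrow> bool" where
  "Fq_lin_indep q g \<longleftrightarrow>
     (\<forall>c. (\<forall>i<length g. c i \<in> Fq q) \<longrightarrow> (\<Sum>i<length g. c i * g ! i) = 0
          \<longrightarrow> (\<forall>i<length g. c i = 0))"

definition Fq_span :: "nat \<Rightarrow> 'a::field list \<Rightarrow> 'a set" where
  "Fq_span q g = {(\<Sum>i<length g. c i * g ! i) | c. \<forall>i<length g. c i \<in> Fq q}"

definition Pi_g :: "nat \<Rightarrow> 'a::field list \<Rightarrow> 'a poly" where
  "Pi_g q g = (\<Prod>u\<in>Fq_span q g. [:- u, 1:])"

(* M_n(g_1,...,g_n): (j,l) entry g_l^[j-1]  (0-based here) *)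
definition Mn :: "nat \<Rightarrow> 'a::field list \<Rightarrow> 'a mat" where
  "Mn q g = mat (length g) (length g) (\<lambda>(j,l). (g ! l) ^ (q ^ j))"

(* \<frak>D_i(g,x): M_n(g_1,...,g_n,x) with the column of index i (0-based) removed,
   entries are polynomials *)
definition Dmat :: "nat \<Rightarrow> 'a::field list \<Rightarrow> nat \<Rightarrow> 'a poly mat" where
  "Dmat q g i =
     (let cols = map (\<lambda>c. [:c:]) g @ [[:0, 1:]];
          cols' = take i cols @ drop (Suc i) cols
      in mat (length g) (length g) (\<lambda>(j,l). (cols' ! l) ^ (q ^ j)))"

definition Lambda_gr :: "nat \<Rightarrow> 'a::field list \<Rightarrow> 'a list \<Rightarrow> 'a poly" where
  "Lambda_gr q g r =
     smult (inverse (det (Mn q g)))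
       (\<Sum>i<length g. smult ((-1) ^ (length g - 1 - i) * r ! i) (det (Dmat q g i)))"

(* elements of L_q(x,q^m)^2 as pairs; left action by composition *)
type_synonym 'a vec2 = "'a poly \<times> 'a poly"

definition vcomp :: "'a::field poly \<Rightarrow> 'a vec2 \<Rightarrow> 'a vec2" where
  "vcomp h f = (pcompose h (fst f), pcompose h (snd f))"

definition vadd :: "'a::field vec2 \<Rightarrow> 'a vec2 \<Rightarrow> 'a vec2" where
  "vadd f h = (fst f + fst h, snd f + snd h)"

definition interp_module :: "nat \<Rightarrow> 'a::field list \<Rightarrow> 'a list \<Rightarrow> 'a vec2 set" where
  "interp_module q g r =
     {vadd (vcomp \<beta> (Pi_g q g, 0)) (vcomp \<gamma> (- Lambda_gr q g r, [:0, 1:])) | \<beta> \<gamma>.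
        is_linearized q \<beta> \<and> is_linearized q \<gamma>}"

definition wdeg :: "nat \<Rightarrow> nat \<Rightarrow> 'a::field vec2 \<Rightarrow> nat \<Rightarrow> ereal" where
  "wdeg q k f j = (if j = 1 then qdeg q (fst f) else qdeg q (snd f) + ereal (real k - 1))"

definition lpos :: "nat \<Rightarrow> nat \<Rightarrow> 'a::field vec2 \<Rightarrow> nat" where
  "lpos q k f = (if wdeg q k f 1 \<le> wdeg q k f 2 then 2 else 1)"

definition comp_at :: "'a::field vec2 \<Rightarrow> nat \<Rightarrow> 'a poly" where
  "comp_at f j = (if j = 1 then fst f else snd f)"

definition unit_vec :: "nat \<Rightarrow> 'a::field poly \<Rightarrow> 'a vec2" where
  "unit_vec j p = (if j = 1 then (p, 0) else (0, p))"

definition lm :: "nat \<Rightarrow> nat \<Rightarrow> 'a::field vec2 \<Rightarrow> 'a vec2" where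
  "lm q k f = (let j = lpos q k f in unit_vec j (monom 1 (q ^ qdegn q (comp_at f j))))"

definition lt :: "nat \<Rightarrow> nat \<Rightarrow> 'a::field vec2 \<Rightarrow> 'a vec2" where
  "lt q k f = (let j = lpos q k f; d = qdegn q (comp_at f j)
               in unit_vec j (monom (coeff (comp_at f j) (q ^ d)) (q ^ d)))"

definition vsum :: "'a::field vec2 list \<Rightarrow> 'a vec2" where
  "vsum xs = foldr vadd xs (0, 0)"

definition reducible :: "nat \<Rightarrow> nat \<Rightarrow> 'a::field vec2 \<Rightarrow> 'a vec2 set \<Rightarrow> bool" where
  "reducible q k f F \<longleftrightarrow>
     (\<exists>ts :: ('a vec2 \<times> 'a \<times> nat) list.
        (\<forall>(h, b, a) \<in> set ts. h \<in> F \<and> lm q k f = vcomp (monom 1 (q ^ a)) (lm q k h))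
      \<and> lt q k f = vsum (map (\<lambda>(h, b, a). vcomp (monom b (q ^ a)) (lt q k h)) ts))"

definition minimal_wrt :: "nat \<Rightarrow> nat \<Rightarrow> 'a::field vec2 \<Rightarrow> 'a vec2 set \<Rightarrow> bool" where
  "minimal_wrt q k f F \<longleftrightarrow> \<not> reducible q k f F"

definition is_basis :: "nat \<Rightarrow> 'a::field vec2 set \<Rightarrow> 'a vec2 set \<Rightarrow> bool" where
  "is_basis q M B \<longleftrightarrow> finite B \<and>
     M = {vsum (map (\<lambda>b. vcomp (a b) b) bs) | a bs. set bs = B \<and> distinct bs
              \<and> (\<forall>b\<in>B. is_linearized q (a b))} \<and>
     (\<forall>a bs. set bs = B \<and> distinct bs \<and> (\<forall>b\<in>B. is_linearized q (a b))
        \<longrightarrow> vsum (map (\<lambda>b. vcomp (a b) b) bs) = (0, 0) \<longrightarrow> (\<forall>b\<in>B. a b = 0))"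

definition minimal_basis :: "nat \<Rightarrow> nat \<Rightarrow> 'a::field vec2 set \<Rightarrow> 'a vec2 set \<Rightarrow> bool" where
  "minimal_basis q k M B \<longleftrightarrow> is_basis q M B \<and> (0, 0) \<notin> B \<and>
     (\<forall>b\<in>B. minimal_wrt q k b (B - {b}))"

(* 2x2 matrices over L_q as quadruples (b11, b12, b21, b22); matrix composition *)
type_synonym 'a mat2 = "'a poly \<times> 'a poly \<times> 'a poly \<times> 'a poly"

definition mcomp :: "'a::field mat2 \<Rightarrow> 'a mat2 \<Rightarrow> 'a mat2" where
  "mcomp M B = (case M of (m11, m12, m21, m22) \<Rightarrow> case B of (b11, b12, b21, b22) \<Rightarrow>
     (pcompose m11 b11 + pcompose m12 b21, pcompose m11 b12 + pcompose m12 b22,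
      pcompose m21 b11 + pcompose m22 b21, pcompose m21 b12 + pcompose m22 b22))"

(* one iteration of Algorithm 3; B = [P, -K; N, -D] *)
definition alg3_step :: "nat \<Rightarrow> nat \<Rightarrow> 'a::field \<times> 'a \<Rightarrow> 'a mat2 \<Rightarrow> 'a mat2" where
  "alg3_step q k gr B = (case gr of (gi, ri) \<Rightarrow> case B of (b11, b12, b21, b22) \<Rightarrow>
     (let P = b11; K = - b12; N = b21; D = - b22;
          \<Gamma> = poly P gi - poly K ri; \<Delta> = poly N gi - poly D ri
      in if (qdeg q P \<le> qdeg q D + ereal (real k - 1) \<and> \<Gamma> \<noteq> 0) \<or> \<Delta> = 0
         then mcomp (monom 1 q - monom (\<Gamma> ^ (q - 1)) 1, 0, monom \<Delta> 1, - monom \<Gamma> 1) B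
         else mcomp (monom \<Delta> 1, - monom \<Gamma> 1, 0, monom 1 q - monom (\<Delta> ^ (q - 1)) 1) B))"

fun alg3_loop :: "nat \<Rightarrow> nat \<Rightarrow> ('a::field \<times> 'a) list \<Rightarrow> 'a mat2 \<Rightarrow> 'a mat2" where
  "alg3_loop q k [] B = B"
| "alg3_loop q k (gr # grs) B = alg3_loop q k grs (alg3_step q k gr B)"

definition alg3 :: "nat \<Rightarrow> nat \<Rightarrow> 'a::field list \<Rightarrow> 'a list \<Rightarrow> 'a mat2" where
  "alg3 q k g r = alg3_loop q k (zip g r) ([:0, 1:], 0, 0, [:0, 1:])"

definition row1 :: "'a::field mat2 \<Rightarrow> 'a vec2" where
  "row1 B = (case B of (b11, b12, b21, b22) \<Rightarrow> (b11, b12))"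

definition row2 :: "'a::field mat2 \<Rightarrow> 'a vec2" where
  "row2 B = (case B of (b11, b12, b21, b22) \<Rightarrow> (b21, b22))"

end

theory Submission
  imports Defs "HOL-Number_Theory.Residues"
begin

hide_const (open) UnivPoly.coeff UnivPoly.monom UnivPoly.up_ring.monom

text \<open>
  After \<open>i\<close> steps the two rows of Algorithm 3 form a basis of the module \<open>\<frak>M\<^sub>i\<close> of
  linearized pairs \<open>(f\<^sub>1, f\<^sub>2)\<close> with \<open>f\<^sub>1(g\<^sub>j) + f\<^sub>2(r\<^sub>j) = 0\<close> for \<open>j < i\<close>, the first row
  with leading position 1 and the second with leading position 2. In a step with \<open>\<Gamma> \<noteq> 0\<close>
  the first row is composed with \<open>x\<^sup>q - \<Gamma>\<^sup>q\<^sup>-\<^sup>1 x\<close>, the subspace polynomial of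
  \<open>\<bbbF>\<^sub>q \<Gamma>\<close>; every linearized polynomial vanishing at \<open>\<Gamma>\<close> factors through it from the
  right, so together with \<open>\<Delta> R\<^sub>1 - \<Gamma> R\<^sub>2\<close> it generates \<open>\<frak>M\<^sub>i\<^sub>+\<^sub>1\<close>, and the branch
  condition keeps the two leading positions apart. Linear independence of \<open>g\<close> ensures that
  \<open>\<Gamma>\<close> and \<open>\<Delta>\<close> never both vanish and that the Moore determinant is nonzero, whence
  \<open>\<Lambda>(g\<^sub>j) = r\<^sub>j\<close> and, by right division by \<open>\<Pi>\<^sub>g\<close>, \<open>\<frak>M\<^sub>n = \<frak>M(r)\<close>. Finally,
  basis elements with different leading positions cannot reduce each other.
\<close>

lemma finite_field_power_card_eq:
  fixes x :: "'a::{field,finite}"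
  shows "x ^ card (UNIV :: 'a set) = x"
proof (cases "x = 0")
  case False
  define U where "U = UNIV - {0 :: 'a}"
  have "bij_betw ((*) x) U U"
    by (rule bij_betwI[where g = "\<lambda>y. y / x"]) (use False in \<open>auto simp: U_def\<close>)
  hence "(\<Prod>y\<in>U. x * y) = \<Prod>U"
    by (rule prod.reindex_bij_betw)
  moreover have "(\<Prod>y\<in>U. x * y) = x ^ card U * \<Prod>U"
    by (simp add: prod.distrib)
  moreover have "\<Prod>U \<noteq> 0"
    by (simp add: U_def)
  ultimately have "x ^ card U = 1"
    by simp
  moreover have "card (UNIV :: 'a set) = Suc (card U)"
    using card_Suc_Diff1[of "UNIV :: 'a set" 0] by (simp add: U_def)
  ultimately show ?thesis
    by simp
qed (simp add: finite_UNIV_card_ge_0)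

lemma CHAR_eq_prime_if_card_eq_power:
  assumes p: "prime p" and card: "card (UNIV :: 'a::{field,finite} set) = p ^ k"
  shows "CHAR('a) = p"
proof -
  have prime_CHAR: "prime CHAR('a)"
    by (rule prime_CHAR_semidom) (simp add: finite_imp_CHAR_pos)
  hence "CHAR('a) dvd p"
    using CHAR_dvd_CARD[where 'a = 'a] card prime_dvd_power by metis
  thus ?thesis
    using p prime_CHAR primes_dvd_imp_eq by blast
qed

lemma poly_eq_0_if_roots_card_gt_degree:
  fixes p :: "'a::idom poly"
  assumes "finite S" "degree p < card S" "\<And>s. s \<in> S \<Longrightarrow> poly p s = 0"
  shows "p = 0"
proof (rule ccontr)
  assume p: "p \<noteq> 0"
  have "S \<subseteq> {x. poly p x = 0}"
    using assms by auto
  hence "card S \<le> card {x. poly p x = 0}"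
    using poly_roots_finite[OF p] by (intro card_mono)
  also have "\<dots> \<le> degree p"
    by (rule card_poly_roots_bound[OF p])
  finally show False
    using assms by simp
qed

lemma degree_diff_less_if_lead_coeff_eq:
  fixes p s :: "'a::ab_group_add poly"
  assumes "degree p = degree s" "lead_coeff p = lead_coeff s" "p \<noteq> s"
  shows "degree (p - s) < degree p"
proof (rule ccontr)
  assume "\<not> degree (p - s) < degree p"
  moreover have "coeff (p - s) n = 0" if "n \<ge> degree p" for n
    using that assms by (cases "n = degree p") (auto simp: coeff_eq_0)
  moreover have "coeff (p - s) (degree (p - s)) \<noteq> 0"
    using assms(3) by (intro leading_coeff_neq_0) simp
  ultimately show False
    by simp
qed

lemma degree_diff_eq_left:
  fixes p s :: "'a::ab_group_add poly"
  shows "degree s < degree p \<Longrightarrow> degree (p - s) = degree p"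
  using degree_add_eq_left[of "- s" p] by simp

lemma lead_coeff_diff_left:
  fixes p s :: "'a::ab_group_add poly"
  shows "degree s < degree p \<Longrightarrow> lead_coeff (p - s) = lead_coeff p"
  using degree_diff_eq_left[of s p] by (simp add: coeff_eq_0)

lemma monic_poly_eq_prod_roots:
  fixes p :: "'a::idom poly"
  assumes S: "finite S" and monic: "lead_coeff p = 1" and deg: "degree p = card S"
    and roots: "\<And>s. s \<in> S \<Longrightarrow> poly p s = 0"
  shows "p = (\<Prod>s\<in>S. [:-s, 1:])"
proof (rule ccontr)
  define P where "P = (\<Prod>s\<in>S. [:-s, 1:] :: 'a poly)"
  assume "p \<noteq> (\<Prod>s\<in>S. [:-s, 1:])"
  hence "p \<noteq> P"
    by (simp add: P_def)
  moreover have "degree P = card S"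
    by (simp add: P_def degree_prod_eq_sum_degree)
  moreover have "lead_coeff P = 1"
    by (simp add: P_def lead_coeff_prod)
  ultimately have "degree (p - P) < card S"
    using degree_diff_less_if_lead_coeff_eq[of p P] monic deg by simp
  moreover have "poly (p - P) s = 0" if "s \<in> S" for s
    using roots[OF that] that S by (simp add: P_def poly_prod)
  ultimately have "p - P = 0"
    using poly_eq_0_if_roots_card_gt_degree[OF S] by blast
  thus False
    using \<open>p \<noteq> P\<close> by simp
qed

lemma pcompose_monom:
  fixes c :: "'a::comm_semiring_1"
  shows "pcompose (monom c n) p = smult c (p ^ n)"
proof -
  have "pcompose ([:0, 1:] ^ n) p = p ^ n"
    by (induction n) (simp_all add: pcompose_mult pcompose_pCons pcompose_1)
  thus ?thesis
    by (simp add: monom_altdef pcompose_smult)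
qed

lemma pcompose_monom_1:
  fixes c :: "'a::comm_semiring_1"
  shows "pcompose (monom c 1) p = smult c p"
  using pcompose_monom[of c 1 p] by simp

lemma pcompose_monom_1_monom_1:
  fixes a b :: "'a::comm_semiring_1"
  shows "pcompose (monom a 1) (monom b 1) = monom (a * b) 1"
  unfolding pcompose_monom_1 by (simp add: smult_monom)

lemma smult_sum_right: "smult c (sum f A) = (\<Sum>i\<in>A. smult c (f i))"
  by (induction A rule: infinite_finite_induct) (auto simp: smult_add_right)

lemma distinct_list_of_doubleton:
  assumes "set bs = {x, y}" "distinct bs" "x \<noteq> y"
  shows "bs = [x, y] \<or> bs = [y, x]"
proof -
  have "length bs = 2"
    using distinct_card[OF assms(2)] assms by simp
  then obtain u v where "bs = [u, v]"
    by (auto simp: numeral_2_eq_2 length_Suc_conv)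
  thus ?thesis
    using assms by (auto simp: doubleton_eq_iff)
qed


lemma det_map_mat_const_poly: "det (map_mat (\<lambda>c. [:c:]) A) = [:det (A :: 'a::comm_ring_1 mat):]"
proof -
  interpret comm_ring_hom "\<lambda>c::'a. [:c:]"
    by unfold_locales auto
  show ?thesis
    by (rule hom_det)
qed

lemma poly_det: "poly (det A) x = det (map_mat (\<lambda>p. poly p x) (A :: 'a::comm_ring_1 poly mat))"
proof -
  interpret comm_ring_hom "\<lambda>p. poly p x"
    by unfold_locales auto
  show ?thesis
    by (rule hom_det[symmetric])
qed


section \<open>Linearized polynomials over a field of order \<open>q\<^sup>m\<close>\<close>

locale Fqm_field =
  fixes q e m :: nat and ty :: "'a::{field,finite} itself"
  assumes e_pos: "e > 0" and q_def: "q = CHAR('a) ^ e" and m_pos: "m \<ge> 1"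
    and card_UNIV: "card (UNIV :: 'a set) = q ^ m"
begin

abbreviation lin :: "'a poly \<Rightarrow> bool" where "lin f \<equiv> is_linearized q f"
abbreviation FQ :: "'a set" where "FQ \<equiv> Fq q"

lemma prime_CHAR: "prime CHAR('a)"
  by (rule prime_CHAR_semidom) (simp add: finite_imp_CHAR_pos)

lemma q_gt1: "q > 1"
proof -
  have "CHAR('a) > 1"
    using prime_CHAR prime_gt_1_nat by blast
  thus ?thesis
    unfolding q_def using e_pos one_less_power by blast
qed

lemma q_pos: "q > 0"
  using q_gt1 by simp

lemma frobenius_add:
  fixes x y :: "'b::comm_semiring_1"
  assumes "CHAR('b) = CHAR('a)"
  shows "(x + y) ^ (q ^ j) = x ^ (q ^ j) + y ^ (q ^ j)"
  using assms prime_CHAR by (intro freshmans_dream'[where n = "e * j"]) (auto simp: q_def power_mult)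

lemma frobenius_sum:
  fixes f :: "'c \<Rightarrow> 'b::comm_semiring_1"
  assumes "CHAR('b) = CHAR('a)"
  shows "sum f A ^ (q ^ j) = (\<Sum>i\<in>A. f i ^ (q ^ j))"
  using assms prime_CHAR by (intro freshmans_dream_sum'[where n = "e * j"]) (auto simp: q_def power_mult)

lemma frobenius_diff:
  fixes x y :: "'b::comm_ring_1"
  assumes "CHAR('b) = CHAR('a)"
  shows "(x - y) ^ (q ^ j) = x ^ (q ^ j) - y ^ (q ^ j)"
proof -
  have "(- y + y) ^ (q ^ j) = 0"
    using q_pos by (simp add: power_0_left)
  hence "(- y) ^ (q ^ j) + y ^ (q ^ j) = 0"
    by (simp only: frobenius_add[OF assms])
  hence "(- y) ^ (q ^ j) = - (y ^ (q ^ j))"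
    by (simp add: eq_neg_iff_add_eq_0)
  thus ?thesis
    using frobenius_add[OF assms, of x "- y" j] by simp
qed

lemma Fq_1 [simp]: "1 \<in> FQ"
  by (simp add: Fq_def)

lemma Fq_add: "x \<in> FQ \<Longrightarrow> y \<in> FQ \<Longrightarrow> x + y \<in> FQ"
  using frobenius_add[of x y 1] by (simp add: Fq_def)

lemma Fq_diff: "x \<in> FQ \<Longrightarrow> y \<in> FQ \<Longrightarrow> x - y \<in> FQ"
  using frobenius_diff[of x y 1] by (simp add: Fq_def)

lemma Fq_uminus: "x \<in> FQ \<Longrightarrow> - x \<in> FQ"
  using Fq_diff[of 0 x] q_pos by (simp add: Fq_def)

lemma Fq_mult: "x \<in> FQ \<Longrightarrow> y \<in> FQ \<Longrightarrow> x * y \<in> FQ"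
  by (simp add: Fq_def power_mult_distrib)

lemma Fq_inverse: "x \<in> FQ \<Longrightarrow> inverse x \<in> FQ"
  by (simp add: Fq_def power_inverse)

lemma Fq_power_q_power: "x \<in> FQ \<Longrightarrow> x ^ (q ^ j) = x"
  by (induction j) (auto simp: Fq_def power_mult power_Suc2 simp del: power_Suc)

lemma lin_coeff_0: "lin f \<Longrightarrow> coeff f 0 = 0"
  unfolding is_linearized_def using q_pos by (metis power_not_zero zero_less_iff_neq_zero)

lemma lin_0 [simp]: "lin 0"
  by (simp add: is_linearized_def)

lemma lin_monom [simp]: "lin (monom c (q ^ j))"
  by (auto simp: is_linearized_def)

lemma lin_monom_1 [simp]: "lin (monom c (Suc 0))"
  using lin_monom[of c 0] by simp

lemma lin_X [simp]: "lin [:0, 1:]"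
  using lin_monom_1[of 1] by (simp add: monom_altdef)

lemma lin_add [simp]: "lin f \<Longrightarrow> lin g \<Longrightarrow> lin (f + g)"
  by (auto simp: is_linearized_def) (metis add.right_neutral)

lemma lin_uminus [simp]: "lin f \<Longrightarrow> lin (- f)"
  by (auto simp: is_linearized_def)

lemma lin_diff [simp]: "lin f \<Longrightarrow> lin g \<Longrightarrow> lin (f - g)"
  using lin_add[of f "- g"] by simp

lemma lin_smult [simp]: "lin f \<Longrightarrow> lin (smult c f)"
  by (auto simp: is_linearized_def)

lemma lin_sum: "(\<And>i. i \<in> A \<Longrightarrow> lin (f i)) \<Longrightarrow> lin (sum f A)"
  by (induction A rule: infinite_finite_induct) auto

lemma lin_expansion:
  assumes "lin f"
  shows "f = (\<Sum>j\<le>degree f. monom (coeff f (q ^ j)) (q ^ j))"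
proof (rule poly_eqI)
  fix n
  have "coeff (\<Sum>j\<le>degree f. monom (coeff f (q ^ j)) (q ^ j)) n
        = (\<Sum>j\<le>degree f. if q ^ j = n then coeff f (q ^ j) else 0)"
    by (simp add: coeff_sum)
  also have "\<dots> = coeff f n"
  proof (cases "\<exists>j. n = q ^ j")
    case True
    then obtain j0 where n: "n = q ^ j0"
      by auto
    have "j0 < q ^ j0"
      using q_gt1 by (simp add: power_gt_expt)
    hence "coeff f n = 0" if "\<not> j0 \<le> degree f"
      using that n by (simp add: coeff_eq_0)
    thus ?thesis
      using q_gt1 by (auto simp: n sum.delta)
  next
    case False
    hence "coeff f n = 0"
      using assms unfolding is_linearized_def by auto
    thus ?thesis
      using False by (auto intro!: sum.neutral)
  qed
  finally show "coeff f n = coeff (\<Sum>j\<le>degree f. monom (coeff f (q ^ j)) (q ^ j)) n"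
    by simp
qed

lemma lin_pcompose_expansion:
  assumes "lin f"
  shows "pcompose f p = (\<Sum>j\<le>degree f. smult (coeff f (q ^ j)) (p ^ (q ^ j)))"
  by (subst lin_expansion[OF assms]) (simp add: pcompose_sum pcompose_monom)

lemma lin_power_q_power:
  assumes "lin g"
  shows "lin (g ^ (q ^ j))"
proof -
  have "g ^ (q ^ j) = (\<Sum>i\<le>degree g. monom (coeff g (q ^ i) ^ (q ^ j)) (q ^ (i + j)))"
    by (subst lin_expansion[OF assms]) (simp add: frobenius_sum monom_power power_add)
  thus ?thesis
    by (simp add: lin_sum)
qed

lemma lin_pcompose [simp]:
  assumes "lin f" "lin g"
  shows "lin (pcompose f g)"
  using assms by (simp add: lin_pcompose_expansion lin_sum lin_power_q_power)

lemma lin_pcompose_add: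
  assumes "lin f"
  shows "pcompose f (a + b) = pcompose f a + pcompose f b"
  using assms by (simp add: lin_pcompose_expansion frobenius_add smult_add_right sum.distrib)

lemma lin_pcompose_uminus:
  assumes "lin f"
  shows "pcompose f (- a) = - pcompose f a"
  using lin_pcompose_add[OF assms, of a "- a"] assms
  by (simp add: pcompose_0' lin_coeff_0 add_eq_0_iff)

lemma lin_pcompose_smult:
  assumes "lin f" "c \<in> FQ"
  shows "pcompose f (smult c a) = smult c (pcompose f a)"
proof -
  have "smult c a ^ (q ^ j) = smult c (a ^ (q ^ j))" for j
    using Fq_power_q_power[OF assms(2)] by (simp add: smult_power)
  thus ?thesis
    using assms(1) by (simp add: lin_pcompose_expansion smult_sum_right mult.commute)
qed

lemma lin_poly_add:
  assumes "lin f"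
  shows "poly f (x + y) = poly f x + poly f y"
  using lin_pcompose_add[OF assms, of "[:x:]" "[:y:]"] by (simp add: pcompose_pCons_0)

lemma lin_poly_0 [simp]: "lin f \<Longrightarrow> poly f 0 = 0"
  by (simp add: poly_0_coeff_0 lin_coeff_0)

lemma lin_poly_uminus:
  assumes "lin f"
  shows "poly f (- x) = - poly f x"
  using lin_poly_add[OF assms, of x "- x"] assms by (simp add: add_eq_0_iff)

lemma lin_poly_smult:
  assumes "lin f" "c \<in> FQ"
  shows "poly f (c * x) = c * poly f x"
  using lin_pcompose_smult[OF assms, of "[:x:]"] by (simp add: pcompose_pCons_0)

lemma lin_poly_sum:
  assumes "lin f"
  shows "poly f (sum h A) = (\<Sum>i\<in>A. poly f (h i))"
  by (induction A rule: infinite_finite_induct) (auto simp: assms lin_poly_add)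

lemma degree_lin:
  assumes "lin f" "f \<noteq> 0"
  shows "degree f = q ^ qdegn q f"
proof -
  obtain j where j: "degree f = q ^ j"
    using assms unfolding is_linearized_def by (metis leading_coeff_neq_0)
  hence "coeff f (q ^ j) \<noteq> 0"
    using assms(2) by (metis leading_coeff_neq_0)
  moreover have "i \<le> j" if "coeff f (q ^ i) \<noteq> 0" for i
    using le_degree[OF that] j q_gt1 by simp
  ultimately have "qdegn q f = j"
    unfolding qdegn_def by (intro Max_eqI) (auto intro: finite_subset[of _ "{..j}"])
  thus ?thesis
    using j by simp
qed

lemma degree_lin_pos: "lin f \<Longrightarrow> f \<noteq> 0 \<Longrightarrow> degree f > 0"
  using degree_lin q_pos by simp

lemma coeff_qdegn_nonzero:
  assumes "lin f" "f \<noteq> 0"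
  shows "coeff f (q ^ qdegn q f) \<noteq> 0"
  using degree_lin[OF assms] assms by (metis leading_coeff_0_iff)

lemma qdegn_le_iff_degree_le:
  assumes "lin f" "f \<noteq> 0" "lin g" "g \<noteq> 0"
  shows "qdegn q f \<le> qdegn q g \<longleftrightarrow> degree f \<le> degree g"
  using degree_lin[OF assms(1,2)] degree_lin[OF assms(3,4)] q_gt1 by simp

lemma qdegn_less_iff_degree_less:
  assumes "lin f" "f \<noteq> 0" "lin g" "g \<noteq> 0"
  shows "qdegn q f < qdegn q g \<longleftrightarrow> degree f < degree g"
  using degree_lin[OF assms(1,2)] degree_lin[OF assms(3,4)] q_gt1 by simp

lemma qdegn_smult: "c \<noteq> 0 \<Longrightarrow> qdegn q (smult c f) = qdegn q f"
  by (simp add: qdegn_def)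

lemma qdegn_uminus: "qdegn q (- f) = qdegn q f"
  by (simp add: qdegn_def)

lemma qdegn_add_le:
  assumes "lin f" "lin g" "f \<noteq> 0" "g \<noteq> 0" "f + g \<noteq> 0"
  shows "qdegn q (f + g) \<le> max (qdegn q f) (qdegn q g)"
  using degree_add_le_max[of f g] qdegn_le_iff_degree_le assms lin_add
  by (cases "degree f \<le> degree g") (auto simp: max_def)

lemma qdegn_add_eq_left:
  assumes "lin f" "lin g" "f \<noteq> 0" "g = 0 \<or> qdegn q g < qdegn q f"
  shows "f + g \<noteq> 0 \<and> qdegn q (f + g) = qdegn q f"
proof (cases "g = 0")
  case False
  hence "degree g < degree f"
    using assms qdegn_less_iff_degree_less by blast
  hence "degree (f + g) = degree f" "f + g \<noteq> 0"
    using degree_add_eq_left assms(3) by (metis, metis add_cancel_right_left less_not_refl)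
  thus ?thesis
    using degree_lin assms lin_add q_gt1 by (metis power_inject_exp)
qed (use assms in simp)

lemma qdegn_pcompose:
  assumes "lin f" "lin g" "f \<noteq> 0" "g \<noteq> 0"
  shows "pcompose f g \<noteq> 0 \<and> qdegn q (pcompose f g) = qdegn q f + qdegn q g"
proof -
  have nz: "pcompose f g \<noteq> 0"
    using pcompose_eq_0 degree_lin_pos[OF assms(2,4)] assms(3) by blast
  have "degree (pcompose f g) = q ^ (qdegn q f + qdegn q g)"
    by (simp add: degree_pcompose degree_lin assms power_add)
  thus ?thesis
    using degree_lin[OF lin_pcompose[OF assms(1,2)] nz] nz q_gt1 by simp
qed

lemma lin_cancel_leading_term:
  assumes g: "lin g" "g \<noteq> 0" and f: "lin f" "f \<noteq> 0" and "degree g \<le> degree f"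
  shows "\<exists>h. lin h \<and> (f - pcompose h g = 0 \<or> degree (f - pcompose h g) < degree f)"
proof -
  have "qdegn q g \<le> qdegn q f"
    using qdegn_le_iff_degree_le[OF g f] assms(5) by simp
  define N where "N = q ^ (qdegn q f - qdegn q g)"
  define h where "h = monom (lead_coeff f / lead_coeff g ^ N) N"
  have "degree (g ^ N) = degree f"
    using \<open>qdegn q g \<le> qdegn q f\<close> by (simp add: degree_power_eq g f degree_lin N_def flip: power_add)
  moreover have hg: "pcompose h g = smult (lead_coeff f / lead_coeff g ^ N) (g ^ N)"
    by (simp add: h_def pcompose_monom)
  ultimately have "degree (pcompose h g) = degree f"
    using f g by simp
  moreover have "lead_coeff (pcompose h g) = lead_coeff f"
    unfolding hg using g by (simp add: lead_coeff_power)
  ultimately have "f - pcompose h g = 0 \<or> degree (f - pcompose h g) < degree f"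
    using degree_diff_less_if_lead_coeff_eq by (metis eq_iff_diff_eq_0)
  moreover have "lin h"
    by (simp add: h_def N_def)
  ultimately show ?thesis
    by blast
qed

lemma lin_right_division:
  assumes g: "lin g" "g \<noteq> 0" and f: "lin f"
  shows "\<exists>a r. lin a \<and> lin r \<and> f = pcompose a g + r \<and> (r = 0 \<or> degree r < degree g)"
  using f
proof (induction "degree f" arbitrary: f rule: less_induct)
  case less
  show ?case
  proof (cases "f = 0 \<or> degree f < degree g")
    case True
    thus ?thesis
      using less.prems by (metis add_0 lin_0 pcompose_0)
  next
    case False
    then obtain h where "lin h" and h: "f - pcompose h g = 0 \<or> degree (f - pcompose h g) < degree f"
      using lin_cancel_leading_term[OF g less.prems] by fastforce
    show ?thesis
    proof (cases "f - pcompose h g = 0")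
      case True
      hence "f = pcompose h g + 0"
        by simp
      thus ?thesis
        using \<open>lin h\<close> lin_0 by blast
    next
      case False
      moreover have "lin (f - pcompose h g)"
        using less.prems \<open>lin h\<close> g by simp
      ultimately obtain a r where "lin a" "lin r" "f - pcompose h g = pcompose a g + r"
        "r = 0 \<or> degree r < degree g"
        using less.hyps h by blast
      moreover from this have "f = pcompose (a + h) g + r"
        by (simp add: pcompose_add algebra_simps)
      ultimately show ?thesis
        using \<open>lin h\<close> lin_add by blast
    qed
  qed
qed

lemma lin_eq_monom_1_if_degree_less_q:
  assumes "lin \<rho>" "degree \<rho> < q"
  shows "\<rho> = monom (coeff \<rho> 1) 1"
proof (rule poly_eqI)
  fix n
  have "coeff \<rho> n = 0" if "n \<noteq> 1"
  proof (rule ccontr)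
    assume nz: "coeff \<rho> n \<noteq> 0"
    then obtain j where j: "n = q ^ j"
      using assms(1) unfolding is_linearized_def by blast
    have "q ^ j < q ^ 1"
      using le_degree[OF nz] assms(2) j by simp
    hence "j = 0"
      using power_strict_increasing_iff[OF q_gt1, of j 1] by simp
    thus False
      using j that by simp
  qed
  thus "coeff \<rho> n = coeff (monom (coeff \<rho> 1) 1) n"
    by (cases "n = 1") simp_all
qed


definition line_annihilator :: "'a \<Rightarrow> 'a poly" where
  "line_annihilator z = monom 1 q - monom (z ^ (q - 1)) 1"

lemma degree_line_annihilator_linear_term:
  "degree (monom (z ^ (q - 1)) 1) < degree (monom (1::'a) q)"
  using q_gt1 by (intro le_less_trans[OF degree_monom_le]) (simp add: degree_monom_eq)

lemma lin_line_annihilator [simp]: "lin (line_annihilator z)"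
  using lin_monom[of 1 1] by (simp add: line_annihilator_def del: lin_monom)

lemma degree_line_annihilator: "degree (line_annihilator z) = q"
  unfolding line_annihilator_def degree_diff_eq_left[OF degree_line_annihilator_linear_term]
  by (simp add: degree_monom_eq)

lemma line_annihilator_nonzero: "line_annihilator z \<noteq> 0"
  using degree_line_annihilator[of z] q_gt1 by auto

lemma qdegn_line_annihilator: "qdegn q (line_annihilator z) = 1"
  using degree_lin[OF lin_line_annihilator line_annihilator_nonzero, of z]
    degree_line_annihilator q_gt1
  by (metis power_inject_exp power_one_right)

lemma poly_line_annihilator: "poly (line_annihilator z) x = x ^ q - z ^ (q - 1) * x"
  by (simp add: line_annihilator_def poly_monom)

lemma poly_line_annihilator_self: "poly (line_annihilator z) z = 0"
  using q_pos by (simp add: poly_line_annihilator power_Suc2[symmetric])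

lemma Fq_eq_roots: "FQ = {x. poly (line_annihilator 1) x = 0}"
  by (simp add: Fq_def poly_line_annihilator)

lemma line_annihilator_1_dvd: "line_annihilator 1 dvd monom 1 (q ^ j) - monom 1 1"
proof (induction j)
  case (Suc j)
  define A where "A = monom 1 (q ^ j) - monom (1::'a) 1"
  have "A ^ (q ^ 1) = monom 1 (q ^ j) ^ (q ^ 1) - monom 1 1 ^ (q ^ 1)"
    unfolding A_def by (rule frobenius_diff) simp
  also have "\<dots> = monom 1 (q ^ Suc j) - monom 1 q"
    by (simp add: monom_power mult.commute)
  finally have "monom 1 (q ^ Suc j) - monom 1 1 = A ^ q + line_annihilator 1"
    by (simp add: line_annihilator_def)
  moreover have "line_annihilator 1 dvd A ^ q"
    using Suc dvd_trans[OF _ dvd_power[of q A]] q_pos unfolding A_def by blast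
  ultimately show ?case
    by simp
qed (simp add: line_annihilator_def)

lemma card_Fq: "card FQ = q"
proof (rule antisym)
  show "card FQ \<le> q"
    unfolding Fq_eq_roots
    using card_poly_roots_bound[OF line_annihilator_nonzero] degree_line_annihilator by metis
next
  define A where "A = monom 1 (q ^ m) - monom (1::'a) 1"
  obtain H where H: "A = line_annihilator 1 * H"
    using line_annihilator_1_dvd[of m] unfolding A_def by (elim dvdE)
  have "q \<le> q ^ m"
    using power_increasing[OF m_pos, of q] q_pos by simp
  hence "degree A = q ^ m"
    using q_gt1 by (simp add: A_def degree_diff_eq_left degree_monom_eq)
  hence "H \<noteq> 0"
    using H q_gt1 by auto
  hence "degree H = q ^ m - q"
    using H \<open>degree A = q ^ m\<close> line_annihilator_nonzero
    by (simp add: degree_mult_eq degree_line_annihilator)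
  have "poly A x = 0" for x
    using finite_field_power_card_eq[of x] card_UNIV by (simp add: A_def poly_monom)
  hence "UNIV \<subseteq> FQ \<union> {x. poly H x = 0}"
    using H by (auto simp: Fq_eq_roots)
  hence "q ^ m \<le> card (FQ \<union> {x. poly H x = 0})"
    using card_UNIV by (metis card_mono finite_UNIV top.extremum_uniqueI)
  also have "\<dots> \<le> card FQ + card {x. poly H x = 0}"
    by (rule card_Un_le)
  also have "card {x. poly H x = 0} \<le> q ^ m - q"
    using card_poly_roots_bound[OF \<open>H \<noteq> 0\<close>] \<open>degree H = q ^ m - q\<close> by simp
  finally show "q \<le> card FQ"
    using \<open>q \<le> q ^ m\<close> by linarith
qed

lemma prod_line_eq_line_annihilator:
  assumes z: "z \<noteq> 0"
  shows "(\<Prod>c\<in>FQ. [:- (c * z), 1:]) = line_annihilator z"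
proof -
  have inj: "inj_on (\<lambda>c. c * z) FQ"
    using z by (auto simp: inj_on_def)
  have "line_annihilator z = (\<Prod>s\<in>(\<lambda>c. c * z) ` FQ. [:- s, 1:])"
  proof (rule monic_poly_eq_prod_roots)
    show "lead_coeff (line_annihilator z) = 1"
      unfolding line_annihilator_def lead_coeff_diff_left[OF degree_line_annihilator_linear_term]
      by (simp add: degree_monom_eq)
    show "degree (line_annihilator z) = card ((\<lambda>c. c * z) ` FQ)"
      using card_image[OF inj] card_Fq degree_line_annihilator by simp
    fix s
    assume "s \<in> (\<lambda>c. c * z) ` FQ"
    then obtain c where "c \<in> FQ" "s = c * z"
      by blast
    thus "poly (line_annihilator z) s = 0"
      using poly_line_annihilator_self[of z] q_pos
      by (simp add: poly_line_annihilator Fq_def power_mult_distrib algebra_simps)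
  qed simp
  thus ?thesis
    by (simp add: prod.reindex[OF inj])
qed

abbreviation span :: "'a list \<Rightarrow> 'a set" where "span g \<equiv> Fq_span q g"
abbreviation indep :: "'a list \<Rightarrow> bool" where "indep g \<equiv> Fq_lin_indep q g"
abbreviation PI :: "'a list \<Rightarrow> 'a poly" where "PI g \<equiv> Pi_g q g"

lemma span_memI: "(\<forall>i<length g. c i \<in> FQ) \<Longrightarrow> x = (\<Sum>i<length g. c i * g ! i) \<Longrightarrow> x \<in> span g"
  unfolding Fq_span_def by blast

lemma span_Nil: "span [] = {0}"
  by (simp add: Fq_span_def)

lemma span_snoc: "span (g @ [h]) = (\<lambda>(u, c). u + c * h) ` (span g \<times> FQ)"
proof (intro Set.set_eqI iffI)
  fix x
  assume "x \<in> span (g @ [h])"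
  then obtain c where c: "\<forall>i<Suc (length g). c i \<in> FQ"
    "x = (\<Sum>i<Suc (length g). c i * (g @ [h]) ! i)"
    by (auto simp: Fq_span_def)
  hence "x = (\<Sum>i<length g. c i * g ! i) + c (length g) * h"
    by (simp add: nth_append)
  moreover have "(\<Sum>i<length g. c i * g ! i) \<in> span g"
    using c(1) by (intro span_memI) auto
  ultimately show "x \<in> (\<lambda>(u, c). u + c * h) ` (span g \<times> FQ)"
    using c(1) by force
next
  fix x
  assume "x \<in> (\<lambda>(u, c). u + c * h) ` (span g \<times> FQ)"
  then obtain u d c where "x = u + d * h" "d \<in> FQ" "\<forall>i<length g. c i \<in> FQ"
    "u = (\<Sum>i<length g. c i * g ! i)"
    by (auto simp: Fq_span_def)
  thus "x \<in> span (g @ [h])"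
    by (intro span_memI[where c = "\<lambda>i. if i < length g then c i else d"]) (auto simp: nth_append)
qed

lemma span_add:
  assumes "x \<in> span g" "y \<in> span g"
  shows "x + y \<in> span g"
proof -
  obtain c d where "\<forall>i<length g. c i \<in> FQ" "x = (\<Sum>i<length g. c i * g ! i)"
    "\<forall>i<length g. d i \<in> FQ" "y = (\<Sum>i<length g. d i * g ! i)"
    using assms by (auto simp: Fq_span_def)
  thus ?thesis
    by (intro span_memI[where c = "\<lambda>i. c i + d i"]) (auto simp: Fq_add sum.distrib algebra_simps)
qed

lemma span_smult:
  assumes "x \<in> span g" "a \<in> FQ"
  shows "a * x \<in> span g"
proof -
  obtain c where "\<forall>i<length g. c i \<in> FQ" "x = (\<Sum>i<length g. c i * g ! i)"
    using assms by (auto simp: Fq_span_def)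
  thus ?thesis
    using assms(2)
    by (intro span_memI[where c = "\<lambda>i. a * c i"]) (auto simp: Fq_mult sum_distrib_left algebra_simps)
qed

lemma span_diff: "x \<in> span g \<Longrightarrow> y \<in> span g \<Longrightarrow> x - y \<in> span g"
  using span_add[of x g "- y"] span_smult[of y g "- 1"] Fq_uminus[OF Fq_1] by simp

lemma span_nth:
  assumes "i < length g"
  shows "g ! i \<in> span g"
proof (rule span_memI[where c = "\<lambda>j. if j = i then 1 else 0"])
  show "g ! i = (\<Sum>j<length g. (if j = i then 1 else 0) * g ! j)"
    using assms by (subst sum.cong[OF refl, of _ _ "\<lambda>j. if j = i then g ! j else 0"]) auto
qed (simp add: Fq_def zero_power q_pos)

lemma lin_vanishes_on_span:
  assumes "lin f" "\<And>i. i < length g \<Longrightarrow> poly f (g ! i) = 0" "x \<in> span g"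
  shows "poly f x = 0"
  using assms by (auto simp: Fq_span_def lin_poly_sum lin_poly_smult)

lemma indep_snocD:
  assumes "indep (g @ [h])"
  shows "indep g" "h \<notin> span g"
proof -
  show "indep g"
    unfolding Fq_lin_indep_def
  proof (intro allI impI)
    fix c i
    assume c: "\<forall>i<length g. c i \<in> FQ" "(\<Sum>i<length g. c i * g ! i) = 0" "i < length g"
    define c' where "c' j = (if j < length g then c j else 0)" for j
    have "\<forall>j<length (g @ [h]). c' j \<in> FQ"
      using c q_pos by (simp add: c'_def Fq_def power_0_left)
    moreover have "(\<Sum>j<length (g @ [h]). c' j * (g @ [h]) ! j) = 0"
      using c by (simp add: c'_def nth_append)
    ultimately have "\<forall>j<length (g @ [h]). c' j = 0"
      using assms unfolding Fq_lin_indep_def by blast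
    hence "c' i = 0"
      using c(3) by simp
    thus "c i = 0"
      using c(3) by (simp add: c'_def)
  qed
  show "h \<notin> span g"
  proof
    assume "h \<in> span g"
    then obtain c where c: "\<forall>i<length g. c i \<in> FQ" "h = (\<Sum>i<length g. c i * g ! i)"
      by (auto simp: Fq_span_def)
    define c' where "c' j = (if j < length g then c j else - 1)" for j
    have "\<forall>j<length (g @ [h]). c' j \<in> FQ" "(\<Sum>j<length (g @ [h]). c' j * (g @ [h]) ! j) = 0"
      using c Fq_uminus[OF Fq_1] by (simp_all add: c'_def nth_append)
    hence "c' (length g) = 0"
      using assms unfolding Fq_lin_indep_def by simp
    thus False
      by (simp add: c'_def)
  qed
qed

lemma indep_appendD: "indep (g @ h) \<Longrightarrow> indep g"
proof (induction h rule: rev_induct)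
  case (snoc x xs)
  thus ?case
    using indep_snocD(1)[of "g @ xs" x] by simp
qed simp

lemma inj_on_span_snoc:
  assumes "h \<notin> span g"
  shows "inj_on (\<lambda>(u, c). u + c * h) (span g \<times> FQ)"
proof (rule inj_onI, clarsimp)
  fix u c u' c'
  assume A: "u \<in> span g" "c \<in> FQ" "u' \<in> span g" "c' \<in> FQ" "u + c * h = u' + c' * h"
  show "u = u' \<and> c = c'"
  proof (cases "c = c'")
    case False
    hence "h = inverse (c - c') * (u' - u)"
      using A(5) by (simp add: field_simps)
    moreover have "inverse (c - c') * (u' - u) \<in> span g"
      using A by (intro span_smult span_diff Fq_inverse Fq_diff)
    ultimately show ?thesis
      using assms by simp
  qed (use A in simp)
qed

lemma card_span: "indep g \<Longrightarrow> card (span g) = q ^ length g"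
proof (induction g rule: rev_induct)
  case (snoc h g)
  note indep = indep_snocD[OF snoc.prems]
  have "card (span (g @ [h])) = card (span g \<times> FQ)"
    unfolding span_snoc by (rule card_image[OF inj_on_span_snoc[OF indep(2)]])
  thus ?case
    using snoc.IH[OF indep(1)] card_Fq by (simp add: card_cartesian_product)
qed (simp add: span_Nil)

lemma Pi_nonzero: "PI g \<noteq> 0"
  by (simp add: Pi_g_def)

lemma poly_Pi_eq_0_iff: "poly (PI g) x = 0 \<longleftrightarrow> x \<in> span g"
  by (simp add: Pi_g_def poly_prod)

lemma degree_Pi: "degree (PI g) = card (span g)"
  by (simp add: Pi_g_def degree_prod_eq_sum_degree)

lemma lin_pcompose_shift: "lin f \<Longrightarrow> pcompose f [:a, 1:] = f + [:poly f a:]"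
  using lin_pcompose_add[of f "[:0, 1:]" "[:a:]"] by (simp add: pcompose_pCons_0)

lemma Pi_snoc:
  assumes lin: "lin (PI g)" and h: "h \<notin> span g"
  shows "PI (g @ [h]) = pcompose (line_annihilator (poly (PI g) h)) (PI g)"
proof -
  define z where "z = poly (PI g) h"
  have "z \<noteq> 0"
    using h by (simp add: z_def poly_Pi_eq_0_iff)
  have translate: "(\<Prod>u\<in>span g. [:- (u + c * h), 1:]) = pcompose [:- (c * z), 1:] (PI g)"
    if c: "c \<in> FQ" for c
  proof -
    have "(\<Prod>u\<in>span g. [:- (u + c * h), 1:]) = (\<Prod>u\<in>span g. pcompose [:- u, 1:] [:- (c * h), 1:])"
      by (intro prod.cong refl) (simp add: pcompose_pCons algebra_simps)
    also have "\<dots> = PI g + [:poly (PI g) (- (c * h)):]"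
      using lin_pcompose_shift[OF lin] by (simp add: Pi_g_def pcompose_prod)
    also have "poly (PI g) (- (c * h)) = - (c * z)"
      using lin c by (simp add: lin_poly_uminus lin_poly_smult z_def)
    finally show ?thesis
      by (simp add: pcompose_pCons)
  qed
  have "PI (g @ [h]) = (\<Prod>(u, c)\<in>span g \<times> FQ. [:- (u + c * h), 1:])"
    unfolding Pi_g_def span_snoc
    by (subst prod.reindex[OF inj_on_span_snoc[OF h]]) (simp add: case_prod_unfold)
  also have "\<dots> = (\<Prod>c\<in>FQ. \<Prod>u\<in>span g. [:- (u + c * h), 1:])"
    by (subst prod.swap) (simp add: prod.cartesian_product[symmetric])
  also have "\<dots> = (\<Prod>c\<in>FQ. pcompose [:- (c * z), 1:] (PI g))"
    using translate by (rule prod.cong[OF refl])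
  also have "\<dots> = pcompose (\<Prod>c\<in>FQ. [:- (c * z), 1:]) (PI g)"
    by (simp add: pcompose_prod)
  finally show ?thesis
    using \<open>z \<noteq> 0\<close> by (simp add: prod_line_eq_line_annihilator z_def)
qed

lemma lin_Pi: "indep g \<Longrightarrow> lin (PI g)"
proof (induction g rule: rev_induct)
  case Nil
  have "PI [] = [:0, 1:]"
    by (simp add: Pi_g_def span_Nil)
  thus ?case
    by simp
next
  case (snoc h g)
  note indep = indep_snocD[OF snoc.prems]
  thus ?case
    using Pi_snoc[OF snoc.IH[OF indep(1)] indep(2)] snoc.IH[OF indep(1)] by simp
qed

subsection \<open>The Moore matrix and the interpolating polynomial \<open>\<Lambda>\<close>\<close>

lemma Mn_carrier: "Mn q (g :: 'a list) \<in> carrier_mat (length g) (length g)"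
  by (simp add: Mn_def)

lemma lin_eq_0_if_vanishes_on_indep:
  assumes indep: "indep g" and A: "lin A" "degree A < q ^ length g"
    and roots: "\<And>l. l < length g \<Longrightarrow> poly A (g ! l) = 0"
  shows "A = 0"
  using poly_eq_0_if_roots_card_gt_degree[of "span g" A] lin_vanishes_on_span[OF A(1) roots]
    card_span[OF indep] A(2)
  by auto

lemma q_power_combination_eq_0:
  assumes indep: "indep g" and j: "j < length g"
    and roots: "\<And>l. l < length g \<Longrightarrow> (\<Sum>i<length g. c i * (g ! l) ^ (q ^ i)) = 0"
  shows "c j = 0"
proof -
  define n where "n = length g"
  define A where "A = (\<Sum>i<n. monom (c i) (q ^ i))"
  have "lin A"
    unfolding A_def by (intro lin_sum) simp
  moreover have "poly A (g ! l) = 0" if "l < length g" for l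
    using roots[OF that] by (simp add: A_def poly_sum poly_monom n_def)
  moreover have "degree A < q ^ n"
  proof -
    have "coeff A i = 0" if i: "i > q ^ n - 1" for i
    proof -
      have "q ^ j \<noteq> i" if "j < n" for j
        using power_strict_increasing[OF that q_gt1] i by linarith
      thus ?thesis
        by (auto simp: A_def coeff_sum intro!: sum.neutral)
    qed
    hence "degree A \<le> q ^ n - 1"
      by (intro degree_le) auto
    moreover have "q ^ n > 0"
      using q_pos by simp
    ultimately show ?thesis
      by linarith
  qed
  ultimately have "A = 0"
    using lin_eq_0_if_vanishes_on_indep[OF indep] by (simp add: n_def)
  moreover have "coeff A (q ^ j) = c j"
    using j by (simp add: A_def coeff_sum power_inject_exp[OF q_gt1] sum.delta n_def)
  ultimately show ?thesis
    by simp
qed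

lemma det_Mn_nonzero:
  assumes indep: "indep g"
  shows "det (Mn q g) \<noteq> 0"
proof
  define n where "n = length g"
  assume "det (Mn q g) = 0"
  hence "det (transpose_mat (Mn q g)) = 0"
    using det_transpose[OF Mn_carrier[of g]] by simp
  then obtain v where v: "v \<in> carrier_vec n" "v \<noteq> 0\<^sub>v n" "transpose_mat (Mn q g) *\<^sub>v v = 0\<^sub>v n"
    using det_0_iff_vec_prod_zero_field[of "transpose_mat (Mn q g)" n] Mn_carrier
    by (auto simp: n_def)
  have "(\<Sum>i<length g. v $ i * (g ! l) ^ (q ^ i)) = 0" if l: "l < length g" for l
  proof -
    have "(transpose_mat (Mn q g) *\<^sub>v v) $ l = 0"
      using v(3) l by (simp add: n_def)
    thus ?thesis
      using l v(1) by (simp add: scalar_prod_def Mn_def n_def row_def atLeast0LessThan mult.commute)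
  qed
  hence "v = 0\<^sub>v n"
    using q_power_combination_eq_0[OF indep] v(1) by (intro eq_vecI) (auto simp: n_def)
  thus False
    using v(2) by simp
qed

definition Dmat_cols :: "'a list \<Rightarrow> nat \<Rightarrow> 'a poly list" where
  "Dmat_cols g i = (let cols = map (\<lambda>c. [:c:]) g @ [[:0, 1:]] in take i cols @ drop (Suc i) cols)"

lemma Dmat_eq: "Dmat q g i = mat (length g) (length g) (\<lambda>(j, l). (Dmat_cols g i ! l) ^ (q ^ j))"
  by (simp add: Dmat_def Dmat_cols_def Let_def)

lemma Dmat_cols_nth:
  assumes "i < length g" "l < length g"
  shows "Dmat_cols g i ! l =
    (if l < i then [:g ! l:] else if Suc l < length g then [:g ! Suc l:] else [:0, 1:])"
  using assms by (auto simp: Dmat_cols_def nth_append min_def)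

lemma Dmat_carrier: "Dmat q (g :: 'a list) i \<in> carrier_mat (length g) (length g)"
  by (simp add: Dmat_eq)

lemma Dmat_index: "j < length g \<Longrightarrow> l < length g \<Longrightarrow> Dmat q (g :: 'a list) i $$ (j, l) = (Dmat_cols g i ! l) ^ (q ^ j)"
  by (simp add: Dmat_eq)

text \<open>For \<open>i < n\<close> the variable \<open>x\<close> sits in the last column of \<open>\<frak>D\<^sub>i\<close>, so deleting that
  column leaves a constant matrix.\<close>

lemma det_Dmat_minor_const:
  fixes g :: "'a list"
  assumes i: "i < length g" and j: "j < length g"
  defines "C \<equiv> mat_delete (Dmat q g i) j (length g - 1)"
  shows "det C = [:poly (det C) 0:]"
proof -
  have "C = map_mat (\<lambda>c. [:c:]) (map_mat (\<lambda>p. poly p 0) C)"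
  proof (rule eq_matI)
    fix a b
    assume "a < dim_row (map_mat (\<lambda>c. [:c:]) (map_mat (\<lambda>p. poly p 0) C))"
      "b < dim_col (map_mat (\<lambda>c. [:c:]) (map_mat (\<lambda>p. poly p 0) C))"
    hence ab: "a < length g - 1" "b < length g - 1"
      by (auto simp: C_def Dmat_eq)
    have "C $$ (a, b) = [:(if b < i then g ! b else g ! Suc b) ^ (q ^ (if a < j then a else Suc a)):]"
      using ab i j
      by (auto simp: C_def mat_delete_def Dmat_eq Dmat_cols_nth poly_const_pow)
    thus "C $$ (a, b) = map_mat (\<lambda>c. [:c:]) (map_mat (\<lambda>p. poly p 0) C) $$ (a, b)"
      using ab by (simp add: C_def Dmat_eq)
  qed (auto simp: C_def Dmat_eq)
  hence "det C = [:det (map_mat (\<lambda>p. poly p 0) C):]"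
    by (metis det_map_mat_const_poly)
  thus ?thesis
    by simp
qed

lemma lin_det_Dmat:
  assumes i: "i < length g"
  shows "lin (det (Dmat q g i))"
proof -
  define n where "n = length g"
  define D where "D = Dmat q g i"
  have Dc: "D \<in> carrier_mat n n" and n1: "n - 1 < n" and n: "Suc (n - 1) = n" "\<not> n - 1 < i"
    using i Dmat_carrier by (auto simp: D_def n_def)
  have "det D = (\<Sum>j<n. D $$ (j, n - 1) * cofactor D j (n - 1))"
    by (rule laplace_expansion_column[OF Dc n1])
  also have "\<dots> = (\<Sum>j<n. smult ((- 1) ^ (j + (n - 1)) *
        poly (det (mat_delete D j (n - 1))) 0) (monom 1 (q ^ j)))"
  proof (rule sum.cong[OF refl])
    fix j
    assume j: "j \<in> {..<n}"
    have Dj: "D $$ (j, n - 1) = monom 1 (q ^ j)"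
      using j i n1 n by (simp add: D_def Dmat_index Dmat_cols_nth monom_altdef flip: n_def)
    have minus_one_power: "(- 1 :: 'a poly) ^ k = [:(- 1) ^ k:]" for k
      by (induction k) auto
    define c where "c = poly (det (mat_delete D j (n - 1))) 0"
    have minor: "det (mat_delete D j (n - 1)) = [:c:]"
      using det_Dmat_minor_const[OF i, of j] j by (simp add: c_def D_def n_def)
    thus "D $$ (j, n - 1) * cofactor D j (n - 1) = smult ((- 1) ^ (j + (n - 1)) *
        poly (det (mat_delete D j (n - 1))) 0) (monom 1 (q ^ j))"
      unfolding cofactor_def Dj minor by (simp add: minus_one_power mult.commute)
  qed
  finally show ?thesis
    unfolding D_def by (simp add: lin_sum)
qed

lemma lin_Lambda: "length g \<ge> 1 \<Longrightarrow> lin (Lambda_gr q g r)"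
  unfolding Lambda_gr_def by (intro lin_smult lin_sum lin_det_Dmat) auto

definition Dmat_at_col :: "'a list \<Rightarrow> nat \<Rightarrow> 'a \<Rightarrow> nat \<Rightarrow> 'a" where
  "Dmat_at_col g i x c = (if c < i then g ! c else if Suc c < length g then g ! Suc c else x)"

definition Dmat_at :: "'a list \<Rightarrow> nat \<Rightarrow> 'a \<Rightarrow> 'a mat" where
  "Dmat_at g i x = mat (length g) (length g) (\<lambda>(j, c). Dmat_at_col g i x c ^ (q ^ j))"

lemma Dmat_at_carrier: "Dmat_at g i x \<in> carrier_mat (length g) (length g)"
  by (simp add: Dmat_at_def)

lemma poly_det_Dmat:
  assumes i: "i < length g"
  shows "poly (det (Dmat q g i)) x = det (Dmat_at g i x)"
proof -
  have "map_mat (\<lambda>p. poly p x) (Dmat q g i) = Dmat_at g i x"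
    using i
    by (intro eq_matI) (auto simp: Dmat_index Dmat_at_def Dmat_at_col_def Dmat_cols_nth poly_power Dmat_eq)
  thus ?thesis
    by (simp add: poly_det)
qed

lemma det_Dmat_at_other:
  assumes i: "i < length g" and l: "l < length g" and "i \<noteq> l"
  shows "det (Dmat_at g i (g ! l)) = 0"
proof (rule det_identical_columns[OF Dmat_at_carrier])
  define c where "c = (if l < i then l else l - 1)"
  show "c \<noteq> length g - 1" "c < length g" "length g - 1 < length g"
    using assms by (auto simp: c_def)
  have "Dmat_at_col g i (g ! l) c = g ! l" "Dmat_at_col g i (g ! l) (length g - 1) = g ! l"
    using assms by (auto simp: c_def Dmat_at_col_def)
  thus "col (Dmat_at g i (g ! l)) c = col (Dmat_at g i (g ! l)) (length g - 1)"
    using \<open>c < length g\<close> \<open>length g - 1 < length g\<close> by (simp add: Dmat_at_def)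
qed

lemma det_Dmat_at_same:
  assumes l: "l < length g"
  shows "det (Dmat_at g l (g ! l)) = (- 1) ^ (length g - 1 - l) * det (Mn q g)"
proof -
  define n where "n = length g"
  define E where "E = Dmat_at g l (g ! l)"
  define M where "M = Mn q g"
  have n1: "n - 1 < n" and ln: "l < n"
    using l by (auto simp: n_def)
  have Ec: "E \<in> carrier_mat n n" and Mc: "M \<in> carrier_mat n n"
    by (simp_all add: E_def M_def n_def Dmat_at_carrier Mn_carrier)
  text \<open>\<open>E\<close> is \<open>M\<close> with column \<open>l\<close> moved to the end.\<close>
  have del: "mat_delete E j (n - 1) = mat_delete M j l" if j: "j < n" for j
    using Ec Mc ln
    by (intro eq_matI) (auto simp: mat_delete_def E_def M_def Dmat_at_def Dmat_at_col_def Mn_def n_def)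
  have "det E = (\<Sum>j<n. E $$ (j, n - 1) * cofactor E j (n - 1))"
    by (rule laplace_expansion_column[OF Ec n1])
  also have "\<dots> = (\<Sum>j<n. (- 1) ^ (n - 1 - l) * (M $$ (j, l) * cofactor M j l))"
  proof (rule sum.cong[OF refl])
    fix j
    assume "j \<in> {..<n}"
    hence j: "j < n"
      by simp
    have "Dmat_at_col g l (g ! l) (n - 1) = g ! l"
      using ln by (auto simp: Dmat_at_col_def n_def)
    hence "E $$ (j, n - 1) = M $$ (j, l)"
      using j ln n1 by (simp add: E_def M_def Dmat_at_def Mn_def flip: n_def)
    moreover have "j + (n - 1) = (n - 1 - l) + (j + l)"
      using ln by simp
    hence "(- 1 :: 'a) ^ (j + (n - 1)) = (- 1) ^ (n - 1 - l) * (- 1) ^ (j + l)"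
      by (simp only: power_add)
    ultimately show "E $$ (j, n - 1) * cofactor E j (n - 1) = (- 1) ^ (n - 1 - l) * (M $$ (j, l) * cofactor M j l)"
      unfolding cofactor_def del[OF j] by simp
  qed
  also have "\<dots> = (- 1) ^ (n - 1 - l) * det M"
    by (simp add: laplace_expansion_column[OF Mc ln] sum_distrib_left)
  finally show ?thesis
    by (simp add: E_def M_def n_def)
qed

lemma poly_Lambda:
  assumes indep: "indep g" and l: "l < length g"
  shows "poly (Lambda_gr q g r) (g ! l) = r ! l"
proof -
  define n where "n = length g"
  define d where "d = det (Mn q g)"
  have "poly (Lambda_gr q g r) (g ! l) =
      inverse d * (\<Sum>i<n. ((- 1) ^ (n - 1 - i) * r ! i) * det (Dmat_at g i (g ! l)))"
    by (simp add: Lambda_gr_def poly_sum d_def n_def poly_det_Dmat)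
  also have "(\<Sum>i<n. ((- 1) ^ (n - 1 - i) * r ! i) * det (Dmat_at g i (g ! l)))
      = ((- 1) ^ (n - 1 - l) * r ! l) * ((- 1) ^ (n - 1 - l) * d)"
    using l det_Dmat_at_other[of _ g l] det_Dmat_at_same[OF l]
    by (subst sum.cong[OF refl, of _ _ "\<lambda>i. if i = l then ((- 1) ^ (n - 1 - l) * r ! l) *
      ((- 1) ^ (n - 1 - l) * d) else 0"]) (auto simp: d_def n_def)
  also have "\<dots> = r ! l * d"
    by (simp flip: power_add add: algebra_simps)
  finally show ?thesis
    using det_Mn_nonzero[OF indep] by (simp add: d_def)
qed

section \<open>The interpolation module\<close>

lemma vadd_comm: "vadd x y = vadd y x"
  by (simp add: vadd_def add.commute)

lemma vadd_0_right [simp]: "vadd x (0, 0) = x"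
  by (simp add: vadd_def)

lemma vadd_0_left [simp]: "vadd (0, 0) x = x"
  by (simp add: vadd_def)

lemma vcomp_0 [simp]: "vcomp 0 R = (0, 0)"
  by (simp add: vcomp_def)

lemma vcomp_X [simp]: "vcomp [:0, 1:] R = R"
  by (simp add: vcomp_def pcompose_pCons pcompose_1)

lemma vcomp_monom_1: "vcomp (monom c 1) R = (smult c (fst R), smult c (snd R))"
  unfolding vcomp_def pcompose_monom_1 ..

lemma vcomp_vcomp: "vcomp h (vcomp h' R) = vcomp (pcompose h h') R"
  by (simp add: vcomp_def pcompose_assoc)

lemma vcomp_add_left: "vcomp (h + h') R = vadd (vcomp h R) (vcomp h' R)"
  by (simp add: vcomp_def vadd_def pcompose_add)

lemma lin_vcomp_vadd: "lin h \<Longrightarrow> vcomp h (vadd u v) = vadd (vcomp h u) (vcomp h v)"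
  by (simp add: vcomp_def vadd_def lin_pcompose_add)

lemma vadd_assoc: "vadd (vadd x y) z = vadd x (vadd y z)"
  by (simp add: vadd_def add.assoc)

definition eval_at :: "'a list \<Rightarrow> 'a list \<Rightarrow> nat \<Rightarrow> 'a vec2 \<Rightarrow> 'a" where
  "eval_at g r i f = poly (fst f) (g ! i) + poly (snd f) (r ! i)"

definition lin_pair :: "'a vec2 \<Rightarrow> bool" where
  "lin_pair f \<longleftrightarrow> lin (fst f) \<and> lin (snd f)"

text \<open>The module \<open>\<frak>M\<^sub>i\<close> of which the rows of Algorithm 3 form a basis after \<open>i\<close> steps.\<close>

definition vanishing_module :: "'a list \<Rightarrow> 'a list \<Rightarrow> nat \<Rightarrow> 'a vec2 set" where
  "vanishing_module g r i = {f. lin_pair f \<and> (\<forall>j<i. eval_at g r j f = 0)}"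

lemma eval_at_vadd: "eval_at g r i (vadd u v) = eval_at g r i u + eval_at g r i v"
  by (simp add: eval_at_def vadd_def)

lemma eval_at_vcomp: "lin h \<Longrightarrow> eval_at g r i (vcomp h R) = poly h (eval_at g r i R)"
  by (simp add: eval_at_def vcomp_def poly_pcompose lin_poly_add)

lemma vanishing_module_vcomp: "f \<in> vanishing_module g r i \<Longrightarrow> lin h \<Longrightarrow> vcomp h f \<in> vanishing_module g r i"
  by (simp add: vanishing_module_def lin_pair_def eval_at_vcomp) (simp add: vcomp_def)

lemma vanishing_module_vadd:
  "f \<in> vanishing_module g r i \<Longrightarrow> f' \<in> vanishing_module g r i \<Longrightarrow> vadd f f' \<in> vanishing_module g r i"
  by (simp add: vanishing_module_def lin_pair_def eval_at_vadd) (simp add: vadd_def)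

lemma vanishing_module_Suc:
  "vanishing_module g r (Suc i) = {f \<in> vanishing_module g r i. eval_at g r i f = 0}"
  by (auto simp: vanishing_module_def less_Suc_eq)

lemma interp_module_subset:
  assumes indep: "indep g" and "length g \<ge> 1"
  shows "interp_module q g r \<subseteq> vanishing_module g r (length g)"
proof
  fix x
  assume "x \<in> interp_module q g r"
  then obtain \<beta> \<gamma> where "lin \<beta>" "lin \<gamma>"
    and "x = vadd (vcomp \<beta> (PI g, 0)) (vcomp \<gamma> (- Lambda_gr q g r, [:0, 1:]))"
    by (auto simp: interp_module_def)
  hence "x = (pcompose \<beta> (PI g) - pcompose \<gamma> (Lambda_gr q g r), \<gamma>)"
    by (simp add: vadd_def vcomp_def lin_pcompose_uminus pcompose_0' lin_coeff_0)
  moreover have "poly (PI g) (g ! j) = 0" if "j < length g" for j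
    using span_nth[OF that] poly_Pi_eq_0_iff by blast
  ultimately show "x \<in> vanishing_module g r (length g)"
    using \<open>lin \<beta>\<close> \<open>lin \<gamma>\<close> lin_Pi[OF indep] lin_Lambda[OF \<open>length g \<ge> 1\<close>] poly_Lambda[OF indep]
    by (auto simp: vanishing_module_def lin_pair_def eval_at_def poly_pcompose)
qed

text \<open>Conversely, \<open>f\<^sub>1 + f\<^sub>2 \<circ> \<Lambda>\<close> vanishes on \<open>g\<close>, so right division by \<open>\<Pi>\<^sub>g\<close> leaves no
  remainder.\<close>

lemma subset_interp_module:
  assumes indep: "indep g" and "length g \<ge> 1"
  shows "vanishing_module g r (length g) \<subseteq> interp_module q g r"
proof
  fix f
  assume f: "f \<in> vanishing_module g r (length g)"
  obtain f1 f2 where f12: "f = (f1, f2)"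
    by fastforce
  have "lin f1" "lin f2" and vanish: "\<And>j. j < length g \<Longrightarrow> poly f1 (g ! j) + poly f2 (r ! j) = 0"
    using f f12 by (auto simp: vanishing_module_def lin_pair_def eval_at_def)
  define h where "h = f1 + pcompose f2 (Lambda_gr q g r)"
  have "lin h"
    using \<open>lin f1\<close> \<open>lin f2\<close> lin_Lambda[OF \<open>length g \<ge> 1\<close>] by (simp add: h_def)
  then obtain \<beta> \<rho> where "lin \<beta>" "lin \<rho>" and h: "h = pcompose \<beta> (PI g) + \<rho>"
    and \<rho>: "\<rho> = 0 \<or> degree \<rho> < degree (PI g)"
    using lin_right_division[OF lin_Pi[OF indep] Pi_nonzero] by blast
  have "poly \<rho> (g ! j) = 0" if j: "j < length g" for j
  proof -
    have "poly (PI g) (g ! j) = 0"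
      using span_nth[OF j] poly_Pi_eq_0_iff by blast
    moreover have "poly h (g ! j) = 0"
      using vanish[OF j] poly_Lambda[OF indep j] by (simp add: h_def poly_pcompose)
    ultimately show ?thesis
      using h \<open>lin \<beta>\<close> by (simp add: poly_pcompose)
  qed
  hence "\<rho> = 0"
    using \<rho> degree_Pi card_span[OF indep]
      poly_eq_0_if_roots_card_gt_degree[of "span g" \<rho>] lin_vanishes_on_span[OF \<open>lin \<rho>\<close>]
    by auto
  hence "f = vadd (vcomp \<beta> (Pi_g q g, 0)) (vcomp f2 (- Lambda_gr q g r, [:0, 1:]))"
    using f12 h \<open>lin f2\<close> \<open>lin \<beta>\<close>
    by (simp add: h_def vadd_def vcomp_def lin_pcompose_uminus pcompose_0' lin_coeff_0 algebra_simps)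
  thus "f \<in> interp_module q g r"
    unfolding interp_module_def using \<open>lin \<beta>\<close> \<open>lin f2\<close> by blast
qed

lemma interp_module_eq_vanishing_module:
  "indep g \<Longrightarrow> length g \<ge> 1 \<Longrightarrow> interp_module q g r = vanishing_module g r (length g)"
  using interp_module_subset subset_interp_module by blast

definition span_pair :: "'a vec2 \<Rightarrow> 'a vec2 \<Rightarrow> 'a vec2 set" where
  "span_pair R1 R2 = {vadd (vcomp a R1) (vcomp b R2) | a b. lin a \<and> lin b}"

definition indep_pair :: "'a vec2 \<Rightarrow> 'a vec2 \<Rightarrow> bool" where
  "indep_pair R1 R2 \<longleftrightarrow>
     (\<forall>a b. lin a \<longrightarrow> lin b \<longrightarrow> vadd (vcomp a R1) (vcomp b R2) = (0, 0) \<longrightarrow> a = 0 \<and> b = 0)"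

lemma span_pair_swap: "span_pair R1 R2 = span_pair R2 R1"
  unfolding span_pair_def by (metis vadd_comm)

lemma indep_pair_swap: "indep_pair R1 R2 = indep_pair R2 R1"
  unfolding indep_pair_def by (metis vadd_comm)

lemma span_pair_left: "R1 \<in> span_pair R1 R2"
proof -
  have "R1 = vadd (vcomp [:0, 1:] R1) (vcomp 0 R2)"
    by simp
  thus ?thesis
    unfolding span_pair_def using lin_X lin_0 by blast
qed

lemma span_pair_right: "R2 \<in> span_pair R1 R2"
  using span_pair_left span_pair_swap by blast

lemma vsum_linear_combination_pair:
  assumes "set bs = {R1, R2}" "distinct bs" "R1 \<noteq> R2"
  shows "vsum (map (\<lambda>b. vcomp (A b) b) bs) = vadd (vcomp (A R1) R1) (vcomp (A R2) R2)"
  using distinct_list_of_doubleton[OF assms] by (auto simp: vsum_def vadd_comm)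

lemma is_basis_pair:
  assumes "R1 \<noteq> R2" and "indep_pair R1 R2"
  shows "is_basis q (span_pair R1 R2) {R1, R2}"
  unfolding is_basis_def
proof (intro conjI allI impI)
  let ?comb = "\<lambda>A bs. vsum (map (\<lambda>b. vcomp (A b) b) bs)"
  show "span_pair R1 R2 = {?comb A bs | A bs. set bs = {R1, R2} \<and> distinct bs \<and> (\<forall>b\<in>{R1, R2}. lin (A b))}"
  proof (intro Set.set_eqI iffI)
    fix x
    assume "x \<in> span_pair R1 R2"
    then obtain a b where "lin a" "lin b" "x = vadd (vcomp a R1) (vcomp b R2)"
      by (auto simp: span_pair_def)
    hence "x = ?comb (\<lambda>v. if v = R1 then a else b) [R1, R2]"
      "\<forall>v\<in>{R1, R2}. lin (if v = R1 then a else b)"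
      using assms(1) by (simp_all add: vsum_def)
    thus "x \<in> {?comb A bs | A bs. set bs = {R1, R2} \<and> distinct bs \<and> (\<forall>b\<in>{R1, R2}. lin (A b))}"
      using assms(1) by fastforce
  next
    fix x
    assume "x \<in> {?comb A bs | A bs. set bs = {R1, R2} \<and> distinct bs \<and> (\<forall>b\<in>{R1, R2}. lin (A b))}"
    thus "x \<in> span_pair R1 R2"
      using vsum_linear_combination_pair[OF _ _ assms(1)] by (fastforce simp: span_pair_def)
  qed
  fix A bs
  assume "set bs = {R1, R2} \<and> distinct bs \<and> (\<forall>b\<in>{R1, R2}. lin (A b))" "?comb A bs = (0, 0)"
  thus "\<forall>b\<in>{R1, R2}. A b = 0"
    using assms vsum_linear_combination_pair[of bs R1 R2 A] unfolding indep_pair_def by auto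
qed (simp)

section \<open>One step of Algorithm 3\<close>

lemma lin_factors_through_line_annihilator:
  assumes "lin c" "poly c z = 0" "z \<noteq> 0"
  shows "\<exists>c'. lin c' \<and> c = pcompose c' (line_annihilator z)"
proof -
  obtain c' \<rho> where "lin c'" "lin \<rho>" and c: "c = pcompose c' (line_annihilator z) + \<rho>"
    and "\<rho> = 0 \<or> degree \<rho> < degree (line_annihilator z)"
    using lin_right_division[OF lin_line_annihilator line_annihilator_nonzero assms(1)] by blast
  moreover have "\<rho> = 0"
  proof (rule ccontr)
    assume "\<rho> \<noteq> 0"
    hence "\<rho> = monom (coeff \<rho> 1) 1"
      using lin_eq_monom_1_if_degree_less_q \<open>lin \<rho>\<close> \<open>\<rho> = 0 \<or> _\<close> degree_line_annihilator by auto
    moreover have "poly \<rho> z = 0"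
      using assms(2) \<open>lin c'\<close> c by (simp add: poly_pcompose poly_line_annihilator_self)
    ultimately have "coeff \<rho> 1 = 0"
      using assms(3) by (metis mult_eq_0_iff poly_monom power_one_right)
    thus False
      using \<open>\<rho> = monom (coeff \<rho> 1) 1\<close> \<open>\<rho> \<noteq> 0\<close> by simp
  qed
  ultimately show ?thesis
    by auto
qed

lemma indep_pair_step:
  assumes indep: "indep_pair R1 R2" and "b \<noteq> 0"
  shows "indep_pair (vcomp (line_annihilator z) R1) (vadd (vcomp (monom a 1) R1) (vcomp (monom b 1) R2))"
  unfolding indep_pair_def
proof (intro allI impI)
  fix \<alpha> \<beta>
  assume "lin \<alpha>" "lin \<beta>"
    and "vadd (vcomp \<alpha> (vcomp (line_annihilator z) R1))
          (vcomp \<beta> (vadd (vcomp (monom a 1) R1) (vcomp (monom b 1) R2))) = (0, 0)"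
  moreover have "vcomp \<beta> (vadd (vcomp (monom a 1) R1) (vcomp (monom b 1) R2))
      = vadd (vcomp (pcompose \<beta> (monom a 1)) R1) (vcomp (pcompose \<beta> (monom b 1)) R2)"
    using \<open>lin \<beta>\<close> by (simp add: lin_vcomp_vadd vcomp_vcomp)
  ultimately have "vadd (vcomp (pcompose \<alpha> (line_annihilator z) + pcompose \<beta> (monom a 1)) R1)
      (vcomp (pcompose \<beta> (monom b 1)) R2) = (0, 0)"
    by (simp add: vcomp_vcomp vcomp_add_left vadd_assoc)
  moreover have "lin (pcompose \<alpha> (line_annihilator z) + pcompose \<beta> (monom a 1))"
    "lin (pcompose \<beta> (monom b 1))"
    using \<open>lin \<alpha>\<close> \<open>lin \<beta>\<close> by simp_all
  ultimately have sum0: "pcompose \<alpha> (line_annihilator z) + pcompose \<beta> (monom a 1) = 0"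
    and "pcompose \<beta> (monom b 1) = 0"
    using indep unfolding indep_pair_def by blast+
  moreover have "degree (monom b 1) > 0" and deg: "degree (line_annihilator z) > 0"
    using \<open>b \<noteq> 0\<close> q_pos by (simp_all add: degree_monom_eq degree_line_annihilator)
  ultimately have "\<beta> = 0"
    using pcompose_eq_0 by blast
  hence "pcompose \<alpha> (line_annihilator z) = 0"
    using sum0 by simp
  thus "\<alpha> = 0 \<and> \<beta> = 0"
    using \<open>\<beta> = 0\<close> pcompose_eq_0 deg by blast
qed

lemma span_pair_step_subset:
  assumes span: "span_pair R1 R2 = vanishing_module g r i"
    and G: "eval_at g r i R1 = G" and D: "eval_at g r i R2 = D" and ab: "a * G + b * D = 0"
  shows "span_pair (vcomp (line_annihilator G) R1) (vadd (vcomp (monom a 1) R1) (vcomp (monom b 1) R2))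
    \<subseteq> vanishing_module g r (Suc i)"
proof
  let ?U = "vcomp (line_annihilator G) R1"
  let ?V = "vadd (vcomp (monom a 1) R1) (vcomp (monom b 1) R2)"
  have R: "R1 \<in> vanishing_module g r i" "R2 \<in> vanishing_module g r i"
    using span span_pair_left span_pair_right by blast+
  fix f
  assume "f \<in> span_pair ?U ?V"
  then obtain \<alpha> \<beta> where "lin \<alpha>" "lin \<beta>" and f: "f = vadd (vcomp \<alpha> ?U) (vcomp \<beta> ?V)"
    by (auto simp: span_pair_def)
  have "eval_at g r i ?U = 0"
    using G by (simp add: eval_at_vcomp poly_line_annihilator_self)
  moreover have "eval_at g r i ?V = 0"
    using G D ab by (simp add: eval_at_vcomp eval_at_vadd poly_monom)
  ultimately have "eval_at g r i f = 0"
    using \<open>lin \<alpha>\<close> \<open>lin \<beta>\<close> by (simp add: f eval_at_vadd eval_at_vcomp)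
  moreover have "f \<in> vanishing_module g r i"
    unfolding f using R \<open>lin \<alpha>\<close> \<open>lin \<beta>\<close>
    by (intro vanishing_module_vadd vanishing_module_vcomp lin_monom[of _ 0, unfolded power_0]
        lin_line_annihilator)
  ultimately show "f \<in> vanishing_module g r (Suc i)"
    by (simp add: vanishing_module_Suc)
qed

lemma vanishing_module_Suc_subset_span_pair:
  assumes span: "span_pair R1 R2 = vanishing_module g r i"
    and G: "eval_at g r i R1 = G" "G \<noteq> 0" and D: "eval_at g r i R2 = D"
    and "b \<noteq> 0" and ab: "a * G + b * D = 0"
  shows "vanishing_module g r (Suc i)
    \<subseteq> span_pair (vcomp (line_annihilator G) R1) (vadd (vcomp (monom a 1) R1) (vcomp (monom b 1) R2))"
proof
  fix f
  assume "f \<in> vanishing_module g r (Suc i)"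
  hence "f \<in> span_pair R1 R2" and f0: "eval_at g r i f = 0"
    using span by (simp_all add: vanishing_module_Suc)
  then obtain \<alpha> \<beta> where "lin \<alpha>" "lin \<beta>" and f: "f = vadd (vcomp \<alpha> R1) (vcomp \<beta> R2)"
    by (auto simp: span_pair_def)
  text \<open>Eliminate \<open>R\<^sub>2 = b\<^sup>-\<^sup>1 (V - a R\<^sub>1)\<close>; the coefficient \<open>c\<close> left on \<open>R\<^sub>1\<close> vanishes at \<open>G\<close>.\<close>
  define c where "c = \<alpha> - pcompose \<beta> (monom (a / b) 1)"
  have "lin c"
    using \<open>lin \<alpha>\<close> \<open>lin \<beta>\<close> by (simp add: c_def)
  have "a / b * G = - D"
    using ab \<open>b \<noteq> 0\<close> by (simp add: field_simps add_eq_0_iff)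
  hence "poly c G = poly \<alpha> G + poly \<beta> D"
    using \<open>lin \<beta>\<close> by (simp add: c_def poly_pcompose poly_monom lin_poly_uminus)
  also have "\<dots> = 0"
    using f0 G D \<open>lin \<alpha>\<close> \<open>lin \<beta>\<close> by (simp add: f eval_at_vadd eval_at_vcomp)
  finally obtain \<alpha>' where "lin \<alpha>'" and c: "c = pcompose \<alpha>' (line_annihilator G)"
    using lin_factors_through_line_annihilator[OF \<open>lin c\<close> _ G(2)] by blast
  define \<beta>' where "\<beta>' = pcompose \<beta> (monom (1 / b) 1)"
  have "lin \<beta>'"
    using \<open>lin \<beta>\<close> by (simp add: \<beta>'_def)
  have "pcompose \<beta>' (monom b 1) = \<beta>"
    unfolding \<beta>'_def pcompose_assoc[symmetric] pcompose_monom_1_monom_1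
    using \<open>b \<noteq> 0\<close> by (simp add: monom_altdef)
  moreover have "pcompose \<beta>' (monom a 1) = pcompose \<beta> (monom (a / b) 1)"
    unfolding \<beta>'_def pcompose_assoc[symmetric] pcompose_monom_1_monom_1 by simp
  ultimately have "vcomp \<beta>' (vadd (vcomp (monom a 1) R1) (vcomp (monom b 1) R2))
      = vadd (vcomp (pcompose \<beta> (monom (a / b) 1)) R1) (vcomp \<beta> R2)"
    using \<open>lin \<beta>'\<close> by (simp add: lin_vcomp_vadd vcomp_vcomp)
  moreover have "vcomp \<alpha>' (vcomp (line_annihilator G) R1) = vcomp c R1"
    by (simp add: c vcomp_vcomp)
  ultimately have "vadd (vcomp \<alpha>' (vcomp (line_annihilator G) R1))
      (vcomp \<beta>' (vadd (vcomp (monom a 1) R1) (vcomp (monom b 1) R2))) = f"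
    by (simp add: f c_def flip: vadd_assoc vcomp_add_left)
  thus "f \<in> span_pair (vcomp (line_annihilator G) R1) (vadd (vcomp (monom a 1) R1) (vcomp (monom b 1) R2))"
    using \<open>lin \<alpha>'\<close> \<open>lin \<beta>'\<close> unfolding span_pair_def by blast
qed

lemma span_pair_step:
  assumes "span_pair R1 R2 = vanishing_module g r i"
    and "eval_at g r i R1 = G" "G \<noteq> 0" "eval_at g r i R2 = D" "b \<noteq> 0" "a * G + b * D = 0"
  shows "span_pair (vcomp (line_annihilator G) R1) (vadd (vcomp (monom a 1) R1) (vcomp (monom b 1) R2))
    = vanishing_module g r (Suc i)"
  using span_pair_step_subset[of R1 R2 g r i G D a b] vanishing_module_Suc_subset_span_pair[of R1 R2 g r i G D b a]
    assms by blast


section \<open>Leading positions\<close>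

text \<open>For a pair with nonzero leading component, \<open>lpos = 1\<close> and \<open>lpos = 2\<close> amount to the
  following conditions on \<open>q\<close>-degrees, with \<open>kk = k - 1\<close>.\<close>

definition first_dominant :: "nat \<Rightarrow> 'a vec2 \<Rightarrow> bool" where
  "first_dominant kk R \<longleftrightarrow>
     fst R \<noteq> 0 \<and> (snd R = 0 \<or> qdegn q (snd R) + kk < qdegn q (fst R))"

definition second_dominant :: "nat \<Rightarrow> 'a vec2 \<Rightarrow> bool" where
  "second_dominant kk R \<longleftrightarrow>
     snd R \<noteq> 0 \<and> (fst R = 0 \<or> qdegn q (fst R) \<le> qdegn q (snd R) + kk)"

lemma lpos_pair: "lpos q k (p, s) = (if qdeg q p \<le> qdeg q s + ereal (real k - 1) then 2 else 1)"
  by (simp add: lpos_def wdeg_def)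

lemma qdeg_plus_weight:
  assumes "k \<ge> 1" "s \<noteq> 0"
  shows "qdeg q s + ereal (real k - 1) = ereal (real (qdegn q s + (k - 1)))"
  using assms by (simp add: qdeg_def of_nat_diff)

lemma lpos_eq_1_if_first_dominant:
  assumes k: "k \<ge> 1" and "first_dominant (k - 1) R"
  shows "lpos q k R = 1"
proof -
  obtain p s where R: "R = (p, s)" and "p \<noteq> 0" and s: "s = 0 \<or> qdegn q s + (k - 1) < qdegn q p"
    using assms(2) by (cases R) (auto simp: first_dominant_def)
  have "\<not> qdeg q p \<le> qdeg q s + ereal (real k - 1)"
  proof (cases "s = 0")
    case False
    thus ?thesis
      using s \<open>p \<noteq> 0\<close> unfolding qdeg_plus_weight[OF k False] by (simp add: qdeg_def)
  qed (simp add: qdeg_def \<open>p \<noteq> 0\<close>)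
  thus ?thesis
    by (simp add: R lpos_pair)
qed

lemma lpos_eq_2_if_second_dominant:
  assumes k: "k \<ge> 1" and "second_dominant (k - 1) R"
  shows "lpos q k R = 2"
proof -
  obtain p s where R: "R = (p, s)" and "s \<noteq> 0" and p: "p = 0 \<or> qdegn q p \<le> qdegn q s + (k - 1)"
    using assms(2) by (cases R) (auto simp: second_dominant_def)
  have "qdeg q p \<le> qdeg q s + ereal (real k - 1)"
  proof (cases "p = 0")
    case False
    thus ?thesis
      using p unfolding qdeg_plus_weight[OF k \<open>s \<noteq> 0\<close>] by (simp add: qdeg_def)
  qed (simp add: qdeg_def)
  thus ?thesis
    by (simp add: R lpos_pair)
qed

lemma qdeg_le_weighted_iff:
  assumes "k \<ge> 1" "p \<noteq> 0" "s \<noteq> 0"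
  shows "qdeg q p \<le> qdeg q (- s) + ereal (real k - 1) \<longleftrightarrow> qdegn q p \<le> qdegn q s + (k - 1)"
proof -
  have p: "qdeg q p = ereal (real (qdegn q p))" and "- s \<noteq> 0"
    using assms by (simp_all add: qdeg_def)
  show ?thesis
    unfolding p qdeg_plus_weight[OF assms(1) \<open>- s \<noteq> 0\<close>] ereal_less_eq(3) of_nat_le_iff qdegn_uminus ..
qed

definition qdegn_at_most :: "'a poly \<Rightarrow> nat \<Rightarrow> bool" where
  "qdegn_at_most p N \<longleftrightarrow> p = 0 \<or> qdegn q p \<le> N"

lemma qdegn_at_most_lincomb:
  assumes "lin p" "lin s" "qdegn_at_most p N" "qdegn_at_most s N"
  shows "qdegn_at_most (smult x p + smult y s) N"
proof -
  have "qdegn_at_most (smult x p) N" "qdegn_at_most (smult y s) N"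
    using assms(3,4) by (auto simp: qdegn_at_most_def qdegn_smult)
  moreover have "qdegn q (smult x p + smult y s) \<le> max (qdegn q (smult x p)) (qdegn q (smult y s))"
    if "smult x p \<noteq> 0" "smult y s \<noteq> 0" "smult x p + smult y s \<noteq> 0"
    using qdegn_add_le that assms(1,2) lin_smult by blast
  ultimately show ?thesis
    unfolding qdegn_at_most_def by fastforce
qed

lemma qdegn_lincomb_eq:
  assumes "lin p" "lin s" "s \<noteq> 0" "y \<noteq> 0" "p = 0 \<or> qdegn q p < qdegn q s"
  shows "smult x p + smult y s \<noteq> 0 \<and> qdegn q (smult x p + smult y s) = qdegn q s"
proof -
  have "smult y s + smult x p \<noteq> 0 \<and> qdegn q (smult y s + smult x p) = qdegn q (smult y s)"
    using assms by (intro qdegn_add_eq_left) (auto simp: qdegn_smult)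
  thus ?thesis
    using assms by (simp add: qdegn_smult add.commute)
qed

lemma qdegn_line_annihilator_pcompose:
  assumes "lin p" "p \<noteq> 0"
  shows "pcompose (line_annihilator c) p \<noteq> 0 \<and> qdegn q (pcompose (line_annihilator c) p) = qdegn q p + 1"
  using qdegn_pcompose[OF lin_line_annihilator assms(1) line_annihilator_nonzero assms(2)]
    qdegn_line_annihilator by simp

lemma dominant_after_first_branch:
  assumes lin: "lin a1" "lin b1" "lin a2" "lin b2"
    and R1: "first_dominant kk (a1, b1)" and R2: "second_dominant kk (a2, b2)" and "G \<noteq> 0"
    and cond: "qdegn q a1 \<le> qdegn q b2 + kk \<or> D = 0"
  shows "first_dominant kk (pcompose (line_annihilator G) a1, pcompose (line_annihilator G) b1)"
    and "second_dominant kk (smult D a1 + smult (- G) a2, smult D b1 + smult (- G) b2)"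
proof -
  have a1: "a1 \<noteq> 0" and b1: "b1 = 0 \<or> qdegn q b1 + kk < qdegn q a1"
    using R1 by (auto simp: first_dominant_def)
  have b2: "b2 \<noteq> 0" and a2: "a2 = 0 \<or> qdegn q a2 \<le> qdegn q b2 + kk"
    using R2 by (auto simp: second_dominant_def)
  show "first_dominant kk (pcompose (line_annihilator G) a1, pcompose (line_annihilator G) b1)"
    using qdegn_line_annihilator_pcompose[OF lin(1) a1] qdegn_line_annihilator_pcompose[OF lin(2)] b1
    by (cases "b1 = 0") (auto simp: first_dominant_def pcompose_0' lin_coeff_0)
  show "second_dominant kk (smult D a1 + smult (- G) a2, smult D b1 + smult (- G) b2)"
  proof (cases "D = 0")
    case True
    thus ?thesis
      using b2 a2 \<open>G \<noteq> 0\<close> by (auto simp: second_dominant_def qdegn_smult qdegn_uminus)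
  next
    case False
    hence le: "qdegn q a1 \<le> qdegn q b2 + kk"
      using cond by simp
    hence "smult D b1 + smult (- G) b2 \<noteq> 0 \<and> qdegn q (smult D b1 + smult (- G) b2) = qdegn q b2"
      using qdegn_lincomb_eq[OF lin(2,4) b2, of "- G" D] \<open>G \<noteq> 0\<close> b1 by auto
    moreover have "qdegn_at_most (smult D a1 + smult (- G) a2) (qdegn q b2 + kk)"
      using le a2 lin by (intro qdegn_at_most_lincomb) (auto simp: qdegn_at_most_def)
    ultimately show ?thesis
      by (auto simp: second_dominant_def qdegn_at_most_def)
  qed
qed

lemma dominant_after_second_branch:
  assumes lin: "lin a1" "lin b1" "lin a2" "lin b2"
    and R1: "first_dominant kk (a1, b1)" and R2: "second_dominant kk (a2, b2)" and "D \<noteq> 0"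
    and cond: "G = 0 \<or> qdegn q b2 + kk < qdegn q a1"
  shows "first_dominant kk (smult D a1 + smult (- G) a2, smult D b1 + smult (- G) b2)"
    and "second_dominant kk (pcompose (line_annihilator D) a2, pcompose (line_annihilator D) b2)"
proof -
  have a1: "a1 \<noteq> 0" and b1: "b1 = 0 \<or> qdegn q b1 + kk < qdegn q a1"
    using R1 by (auto simp: first_dominant_def)
  have b2: "b2 \<noteq> 0" and a2: "a2 = 0 \<or> qdegn q a2 \<le> qdegn q b2 + kk"
    using R2 by (auto simp: second_dominant_def)
  show "second_dominant kk (pcompose (line_annihilator D) a2, pcompose (line_annihilator D) b2)"
    using qdegn_line_annihilator_pcompose[OF lin(4) b2] qdegn_line_annihilator_pcompose[OF lin(3)] a2
    by (cases "a2 = 0") (auto simp: second_dominant_def pcompose_0' lin_coeff_0)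
  show "first_dominant kk (smult D a1 + smult (- G) a2, smult D b1 + smult (- G) b2)"
  proof (cases "G = 0")
    case True
    thus ?thesis
      using a1 b1 \<open>D \<noteq> 0\<close> by (auto simp: first_dominant_def qdegn_smult qdegn_uminus)
  next
    case False
    hence less: "qdegn q b2 + kk < qdegn q a1"
      using cond by simp
    hence "a2 = 0 \<or> qdegn q a2 < qdegn q a1"
      using a2 by auto
    hence "smult (- G) a2 + smult D a1 \<noteq> 0 \<and> qdegn q (smult (- G) a2 + smult D a1) = qdegn q a1"
      using qdegn_lincomb_eq[OF lin(3,1) a1 \<open>D \<noteq> 0\<close>] by blast
    hence "smult D a1 + smult (- G) a2 \<noteq> 0 \<and> qdegn q (smult D a1 + smult (- G) a2) = qdegn q a1"
      by (metis add.commute)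
    moreover have "qdegn_at_most (smult D b1 + smult (- G) b2) (qdegn q a1 - kk - 1)"
      using less b1 lin by (intro qdegn_at_most_lincomb) (auto simp: qdegn_at_most_def)
    ultimately show ?thesis
      using less by (auto simp: first_dominant_def qdegn_at_most_def add.commute)
  qed
qed

definition alg3_invariant :: "'a list \<Rightarrow> 'a list \<Rightarrow> nat \<Rightarrow> nat \<Rightarrow> 'a mat2 \<Rightarrow> bool" where
  "alg3_invariant g r kk i B \<longleftrightarrow>
     span_pair (row1 B) (row2 B) = vanishing_module g r i \<and> indep_pair (row1 B) (row2 B)
     \<and> first_dominant kk (row1 B) \<and> second_dominant kk (row2 B)"

lemma row1_mcomp: "row1 (mcomp (m11, m12, m21, m22) B) = vadd (vcomp m11 (row1 B)) (vcomp m12 (row2 B))"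
  by (cases B) (simp add: mcomp_def row1_def row2_def vadd_def vcomp_def)

lemma row2_mcomp: "row2 (mcomp (m11, m12, m21, m22) B) = vadd (vcomp m21 (row1 B)) (vcomp m22 (row2 B))"
  by (cases B) (simp add: mcomp_def row1_def row2_def vadd_def vcomp_def)

text \<open>The subspace polynomial of the first \<open>i\<close> points lies in \<open>\<frak>M\<^sub>i\<close> but does not vanish at
  \<open>g\<^sub>i\<close>, so \<open>\<frak>M\<^sub>i\<close> has a generator not vanishing at \<open>(g\<^sub>i, r\<^sub>i)\<close>.\<close>

lemma eval_at_not_both_zero:
  assumes indep: "indep g" and i: "i < length g" and span: "span_pair R1 R2 = vanishing_module g r i"
  shows "eval_at g r i R1 \<noteq> 0 \<or> eval_at g r i R2 \<noteq> 0"
proof (rule ccontr)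
  assume "\<not> (eval_at g r i R1 \<noteq> 0 \<or> eval_at g r i R2 \<noteq> 0)"
  hence zero: "eval_at g r i R1 = 0" "eval_at g r i R2 = 0"
    by auto
  define t where "t = take i g"
  have "indep (take (Suc i) g)"
    using indep indep_appendD[of "take (Suc i) g" "drop (Suc i) g"] by simp
  hence "indep (t @ [g ! i])"
    using i by (simp add: t_def take_Suc_conv_app_nth)
  hence "indep t" "g ! i \<notin> span t"
    using indep_snocD by auto
  have "g ! j \<in> span t" if "j < i" for j
    using span_nth[of j t] that i by (simp add: t_def)
  hence "(PI t, 0) \<in> vanishing_module g r i"
    using lin_Pi[OF \<open>indep t\<close>] by (simp add: vanishing_module_def lin_pair_def eval_at_def poly_Pi_eq_0_iff)
  hence "(PI t, 0) \<in> span_pair R1 R2"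
    using span by simp
  then obtain a b where "lin a" "lin b" "(PI t, 0) = vadd (vcomp a R1) (vcomp b R2)"
    unfolding span_pair_def by blast
  hence "eval_at g r i (PI t, 0) = 0"
    using zero by (metis eval_at_vadd eval_at_vcomp add_0 lin_poly_0)
  thus False
    using \<open>g ! i \<notin> span t\<close> by (simp add: eval_at_def poly_Pi_eq_0_iff)
qed

lemma alg3_step_eq:
  fixes b11 b12 b21 b22 :: "'a poly" and g r :: "'a list" and i :: nat
  defines "\<Gamma> \<equiv> eval_at g r i (b11, b12)" and "\<Delta> \<equiv> eval_at g r i (b21, b22)"
  shows "alg3_step q k (g ! i, r ! i) (b11, b12, b21, b22) =
    (if (qdeg q b11 \<le> qdeg q (- b22) + ereal (real k - 1) \<and> \<Gamma> \<noteq> 0) \<or> \<Delta> = 0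
     then mcomp (line_annihilator \<Gamma>, 0, monom \<Delta> 1, monom (- \<Gamma>) 1) (b11, b12, b21, b22)
     else mcomp (monom \<Delta> 1, monom (- \<Gamma>) 1, 0, line_annihilator \<Delta>) (b11, b12, b21, b22))"
proof -
  have "poly b11 (g ! i) - poly (- b12) (r ! i) = \<Gamma>" "poly b21 (g ! i) - poly (- b22) (r ! i) = \<Delta>"
    by (simp_all add: \<Gamma>_def \<Delta>_def eval_at_def)
  thus ?thesis
    by (simp only: alg3_step_def prod.case Let_def minus_minus minus_monom
        flip: line_annihilator_def)
qed

lemma lin_if_span_pair_eq_vanishing_module:
  assumes "span_pair (b11, b12) (b21, b22) = vanishing_module g r i"
  shows "lin b11" "lin b12" "lin b21" "lin b22"
  using assms span_pair_left[of "(b11, b12)" "(b21, b22)"] span_pair_right[of "(b21, b22)" "(b11, b12)"]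
  by (auto simp: vanishing_module_def lin_pair_def)

lemma alg3_invariant_first_branch:
  assumes span: "span_pair (b11, b12) (b21, b22) = vanishing_module g r i"
    and indep: "indep_pair (b11, b12) (b21, b22)"
    and dom: "first_dominant kk (b11, b12)" "second_dominant kk (b21, b22)"
    and \<Gamma>: "eval_at g r i (b11, b12) = \<Gamma>" "\<Gamma> \<noteq> 0" and \<Delta>: "eval_at g r i (b21, b22) = \<Delta>"
    and cond: "qdegn q b11 \<le> qdegn q b22 + kk \<or> \<Delta> = 0"
  shows "alg3_invariant g r kk (Suc i)
    (mcomp (line_annihilator \<Gamma>, 0, monom \<Delta> 1, monom (- \<Gamma>) 1) (b11, b12, b21, b22))"
proof -
  define U V where "U = vcomp (line_annihilator \<Gamma>) (b11, b12)"
    and "V = vadd (vcomp (monom \<Delta> 1) (b11, b12)) (vcomp (monom (- \<Gamma>) 1) (b21, b22))"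
  have rows: "row1 (mcomp (line_annihilator \<Gamma>, 0, monom \<Delta> 1, monom (- \<Gamma>) 1) (b11, b12, b21, b22)) = U"
    "row2 (mcomp (line_annihilator \<Gamma>, 0, monom \<Delta> 1, monom (- \<Gamma>) 1) (b11, b12, b21, b22)) = V"
    unfolding row1_mcomp row2_mcomp U_def V_def by (simp_all add: row1_def row2_def)
  have "U = (pcompose (line_annihilator \<Gamma>) b11, pcompose (line_annihilator \<Gamma>) b12)"
    "V = (smult \<Delta> b11 + smult (- \<Gamma>) b21, smult \<Delta> b12 + smult (- \<Gamma>) b22)"
    unfolding U_def V_def vcomp_monom_1 by (simp_all add: vcomp_def vadd_def)
  moreover have "span_pair U V = vanishing_module g r (Suc i)"
    unfolding U_def V_def using \<Gamma>(2) by (intro span_pair_step[OF span \<Gamma> \<Delta>]) simp_all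
  moreover have "indep_pair U V"
    unfolding U_def V_def using \<Gamma>(2) by (intro indep_pair_step[OF indep]) simp
  ultimately show ?thesis
    unfolding alg3_invariant_def rows
    using dominant_after_first_branch[OF lin_if_span_pair_eq_vanishing_module[OF span] dom \<Gamma>(2) cond]
    by simp
qed

lemma alg3_invariant_second_branch:
  assumes span: "span_pair (b11, b12) (b21, b22) = vanishing_module g r i"
    and indep: "indep_pair (b11, b12) (b21, b22)"
    and dom: "first_dominant kk (b11, b12)" "second_dominant kk (b21, b22)"
    and \<Gamma>: "eval_at g r i (b11, b12) = \<Gamma>" and \<Delta>: "eval_at g r i (b21, b22) = \<Delta>" "\<Delta> \<noteq> 0"
    and cond: "\<Gamma> = 0 \<or> qdegn q b22 + kk < qdegn q b11"
  shows "alg3_invariant g r kk (Suc i)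
    (mcomp (monom \<Delta> 1, monom (- \<Gamma>) 1, 0, line_annihilator \<Delta>) (b11, b12, b21, b22))"
proof -
  define U V where "U = vadd (vcomp (monom (- \<Gamma>) 1) (b21, b22)) (vcomp (monom \<Delta> 1) (b11, b12))"
    and "V = vcomp (line_annihilator \<Delta>) (b21, b22)"
  have rows: "row1 (mcomp (monom \<Delta> 1, monom (- \<Gamma>) 1, 0, line_annihilator \<Delta>) (b11, b12, b21, b22)) = U"
    "row2 (mcomp (monom \<Delta> 1, monom (- \<Gamma>) 1, 0, line_annihilator \<Delta>) (b11, b12, b21, b22)) = V"
    unfolding row1_mcomp row2_mcomp U_def V_def by (simp_all add: row1_def row2_def vadd_comm)
  have "U = (smult \<Delta> b11 + smult (- \<Gamma>) b21, smult \<Delta> b12 + smult (- \<Gamma>) b22)"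
    "V = (pcompose (line_annihilator \<Delta>) b21, pcompose (line_annihilator \<Delta>) b22)"
    unfolding U_def V_def vcomp_monom_1 by (simp_all add: vcomp_def vadd_def add.commute)
  moreover have "span_pair V U = vanishing_module g r (Suc i)"
    unfolding U_def V_def using \<Delta>(2)
    by (intro span_pair_step[OF span[unfolded span_pair_swap[of "(b11, b12)"]] \<Delta> \<Gamma>]) simp_all
  moreover have "indep_pair V U"
    unfolding U_def V_def using \<Delta>(2)
    by (intro indep_pair_step[OF indep[unfolded indep_pair_swap[of "(b11, b12)"]]]) simp
  ultimately show ?thesis
    unfolding alg3_invariant_def rows span_pair_swap[of U V] indep_pair_swap[of U V]
    using dominant_after_second_branch[OF lin_if_span_pair_eq_vanishing_module[OF span] dom \<Delta>(2) cond]
    by simp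
qed

lemma alg3_invariant_step:
  assumes k: "k \<ge> 1" and indep: "indep g" and i: "i < length g"
    and inv: "alg3_invariant g r (k - 1) i B"
  shows "alg3_invariant g r (k - 1) (Suc i) (alg3_step q k (g ! i, r ! i) B)"
proof -
  obtain b11 b12 b21 b22 where B: "B = (b11, b12, b21, b22)"
    by (cases B) auto
  define \<Gamma> \<Delta> where "\<Gamma> = eval_at g r i (b11, b12)" and "\<Delta> = eval_at g r i (b21, b22)"
  have span: "span_pair (b11, b12) (b21, b22) = vanishing_module g r i"
    and "indep_pair (b11, b12) (b21, b22)"
    and dom: "first_dominant (k - 1) (b11, b12)" "second_dominant (k - 1) (b21, b22)"
    using inv by (simp_all add: alg3_invariant_def B row1_def row2_def)
  have "b11 \<noteq> 0" "b22 \<noteq> 0"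
    using dom by (simp_all add: first_dominant_def second_dominant_def)
  have "\<Gamma> \<noteq> 0 \<or> \<Delta> \<noteq> 0"
    using eval_at_not_both_zero[OF indep i span] by (simp add: \<Gamma>_def \<Delta>_def)
  have step: "alg3_step q k (g ! i, r ! i) B =
    (if (qdegn q b11 \<le> qdegn q b22 + (k - 1) \<and> \<Gamma> \<noteq> 0) \<or> \<Delta> = 0
     then mcomp (line_annihilator \<Gamma>, 0, monom \<Delta> 1, monom (- \<Gamma>) 1) (b11, b12, b21, b22)
     else mcomp (monom \<Delta> 1, monom (- \<Gamma>) 1, 0, line_annihilator \<Delta>) (b11, b12, b21, b22))"
    unfolding B alg3_step_eq qdeg_le_weighted_iff[OF k \<open>b11 \<noteq> 0\<close> \<open>b22 \<noteq> 0\<close>]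
    by (simp add: \<Gamma>_def \<Delta>_def)
  show ?thesis
  proof (cases "(qdegn q b11 \<le> qdegn q b22 + (k - 1) \<and> \<Gamma> \<noteq> 0) \<or> \<Delta> = 0")
    case True
    hence "\<Gamma> \<noteq> 0" and cond: "qdegn q b11 \<le> qdegn q b22 + (k - 1) \<or> \<Delta> = 0"
      using \<open>\<Gamma> \<noteq> 0 \<or> \<Delta> \<noteq> 0\<close> by auto
    show ?thesis
      unfolding step if_P[OF True]
      by (rule alg3_invariant_first_branch[OF span \<open>indep_pair _ _\<close> dom \<Gamma>_def[symmetric] \<open>\<Gamma> \<noteq> 0\<close>
            \<Delta>_def[symmetric] cond])
  next
    case False
    hence "\<Delta> \<noteq> 0" and cond: "\<Gamma> = 0 \<or> qdegn q b22 + (k - 1) < qdegn q b11"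
      by auto
    show ?thesis
      unfolding step if_not_P[OF False]
      by (rule alg3_invariant_second_branch[OF span \<open>indep_pair _ _\<close> dom \<Gamma>_def[symmetric]
            \<Delta>_def[symmetric] \<open>\<Delta> \<noteq> 0\<close> cond])
  qed
qed

lemma alg3_invariant_init: "alg3_invariant g r kk 0 ([:0, 1:], 0, 0, [:0, 1:])"
proof -
  have "span_pair ([:0, 1:], 0) (0, [:0, 1:]) = vanishing_module g r 0"
  proof (intro Set.set_eqI iffI)
    fix x
    assume "x \<in> vanishing_module g r 0"
    hence "lin (fst x)" "lin (snd x)" "x = vadd (vcomp (fst x) ([:0, 1:], 0)) (vcomp (snd x) (0, [:0, 1:]))"
      by (auto simp: vanishing_module_def lin_pair_def vadd_def vcomp_def lin_coeff_0 pcompose_0')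
    thus "x \<in> span_pair ([:0, 1:], 0) (0, [:0, 1:])"
      unfolding span_pair_def by blast
  qed (auto simp: span_pair_def vanishing_module_def lin_pair_def vadd_def vcomp_def lin_coeff_0 pcompose_0')
  moreover have "indep_pair ([:0, 1:], 0) (0, [:0, 1:])"
    by (simp add: indep_pair_def vadd_def vcomp_def pcompose_0' lin_coeff_0)
  ultimately show ?thesis
    by (simp add: alg3_invariant_def row1_def row2_def first_dominant_def second_dominant_def)
qed

lemma alg3_invariant_loop:
  assumes k: "k \<ge> 1" and indep: "indep g" and len: "length r = length g"
  shows "alg3_invariant g r (k - 1) i B \<Longrightarrow> i \<le> length g \<Longrightarrow>
    alg3_invariant g r (k - 1) (length g) (alg3_loop q k (drop i (zip g r)) B)"
proof (induction "length g - i" arbitrary: i B)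
  case 0
  thus ?case
    using len by simp
next
  case (Suc d)
  hence i: "i < length g"
    by simp
  have "drop i (zip g r) = (g ! i, r ! i) # drop (Suc i) (zip g r)"
    using Cons_nth_drop_Suc[of i "zip g r"] i len by simp
  thus ?case
    using Suc.hyps(1)[of "Suc i"] alg3_invariant_step[OF k indep i Suc.prems(1)] Suc.hyps(2) i by simp
qed

lemma comp_at_vcomp: "comp_at (vcomp h v) j = pcompose h (comp_at v j)"
  by (simp add: comp_at_def vcomp_def)

lemma comp_at_unit_vec_same: "comp_at (unit_vec j p) j = p"
  by (simp add: comp_at_def unit_vec_def)

lemma comp_at_unit_vec_other:
  "j \<noteq> j' \<Longrightarrow> j \<in> {1, 2} \<Longrightarrow> j' \<in> {1, 2} \<Longrightarrow> comp_at (unit_vec j' p) j = 0"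
  by (auto simp: comp_at_def unit_vec_def)

lemma lpos_in: "lpos q k f \<in> {1, 2}"
  by (simp add: lpos_def)

text \<open>A leading term can only be cancelled by multiples of leading terms in the same position.\<close>

lemma not_reducible_if_lpos_differs:
  assumes "lpos q k f \<noteq> lpos q k h"
    and "lin (comp_at f (lpos q k f))" "comp_at f (lpos q k f) \<noteq> 0"
  shows "\<not> reducible q k f {h}"
proof
  define j where "j = lpos q k f"
  assume "reducible q k f {h}"
  then obtain ts :: "('a vec2 \<times> 'a \<times> nat) list" where
    ts: "\<forall>(h', b, a) \<in> set ts. h' \<in> {h} \<and> lm q k f = vcomp (monom 1 (q ^ a)) (lm q k h')"
    and lt: "lt q k f = vsum (map (\<lambda>(h', b, a). vcomp (monom b (q ^ a)) (lt q k h')) ts)"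
    unfolding reducible_def by blast
  have lm_f: "comp_at (lm q k f) j = monom 1 (q ^ qdegn q (comp_at f j))"
    by (simp add: lm_def Let_def j_def comp_at_unit_vec_same)
  show False
  proof (cases ts)
    case Nil
    have "comp_at (lt q k f) j \<noteq> 0"
      using coeff_qdegn_nonzero[OF assms(2,3)] by (simp add: lt_def Let_def j_def comp_at_unit_vec_same)
    thus False
      using lt Nil by (simp add: vsum_def comp_at_def split: if_splits)
  next
    case (Cons t ts')
    then obtain a where "lm q k f = vcomp (monom 1 (q ^ a)) (lm q k h)"
      using ts by (cases t) auto
    moreover have "comp_at (lm q k h) j = 0"
      using assms(1) lpos_in[of k f] lpos_in[of k h]
      by (simp add: lm_def Let_def j_def comp_at_unit_vec_other)
    ultimately have "monom 1 (q ^ qdegn q (comp_at f j)) = (0 :: 'a poly)"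
      using lm_f q_pos by (simp add: comp_at_vcomp pcompose_0')
    thus False
      by simp
  qed
qed

lemma alg3_minimal_basis:
  assumes k: "1 \<le> k" "k \<le> length g" and len: "length r = length g" and indep: "indep g"
  shows "minimal_basis q k (interp_module q g r) {row1 (alg3 q k g r), row2 (alg3 q k g r)}
         \<and> lpos q k (row1 (alg3 q k g r)) = 1 \<and> lpos q k (row2 (alg3 q k g r)) = 2"
proof -
  define R1 R2 where "R1 = row1 (alg3 q k g r)" and "R2 = row2 (alg3 q k g r)"
  have "alg3_invariant g r (k - 1) (length g) (alg3 q k g r)"
    using alg3_invariant_loop[OF k(1) indep len alg3_invariant_init] by (simp add: alg3_def)
  hence span: "span_pair R1 R2 = vanishing_module g r (length g)" and "indep_pair R1 R2"
    and dom: "first_dominant (k - 1) R1" "second_dominant (k - 1) R2"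
    by (simp_all add: alg3_invariant_def R1_def R2_def)
  have lpos: "lpos q k R1 = 1" "lpos q k R2 = 2"
    using lpos_eq_1_if_first_dominant[OF k(1) dom(1)] lpos_eq_2_if_second_dominant[OF k(1) dom(2)] .
  have "lin (fst R1)" "lin (snd R2)"
    using span span_pair_left[of R1 R2] span_pair_right[of R2 R1] by (auto simp: vanishing_module_def lin_pair_def)
  moreover have "fst R1 \<noteq> 0" "snd R2 \<noteq> 0"
    using dom by (simp_all add: first_dominant_def second_dominant_def)
  moreover have "interp_module q g r = span_pair R1 R2"
    using interp_module_eq_vanishing_module[OF indep] k span by simp
  ultimately have "minimal_basis q k (interp_module q g r) {R1, R2}"
    using is_basis_pair[OF _ \<open>indep_pair R1 R2\<close>] lpos
      not_reducible_if_lpos_differs[of k R1 R2] not_reducible_if_lpos_differs[of k R2 R1]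
    by (auto simp: minimal_basis_def minimal_wrt_def comp_at_def insert_Diff_if)
  thus ?thesis
    using lpos by (simp add: R1_def R2_def)
qed

end

theorem theorem28:
  fixes q m n k :: nat and g r :: "'a::{field, finite} list"
  assumes "\<exists>p e. prime p \<and> e > 0 \<and> q = p ^ e"
    and "m \<ge> 1"
    and "card (UNIV :: 'a set) = q ^ m"
    and "1 \<le> k" and "k \<le> n"
    and "length g = n" and "length r = n"
    and "Fq_lin_indep q g"
  shows "minimal_basis q k (interp_module q g r) {row1 (alg3 q k g r), row2 (alg3 q k g r)}
         \<and> lpos q k (row1 (alg3 q k g r)) = 1 \<and> lpos q k (row2 (alg3 q k g r)) = 2"
proof -
  obtain p e where "prime p" "e > 0" "q = p ^ e"
    using assms(1) by blast
  moreover from this have "CHAR('a) = p"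
    using CHAR_eq_prime_if_card_eq_power assms(3) by (metis power_mult)
  ultimately interpret Fqm_field q e m "TYPE('a)"
    using assms(2,3) by unfold_locales auto
  show ?thesis
    using alg3_minimal_basis assms(4-8) by simp
qed

end
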